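(* Let $\mathcal{A}$ be an unambiguous strongly noncollapsing irreducible Phan amalgam of rank three with rank-one groups $M_1,M_2,M_3$ and rank-two groups $M_{12}=\langle M_1,M_2\rangle\cong{\rm SU}_3(\mathbb{C})$, $M_{13}=\langle M_1,M_3\rangle\cong M_1\times M_3\cong{\rm SU}_2(\mathbb{C})\times{\rm SU}_2(\mathbb{C})$, and $M_{23}=\langle M_2,M_3\rangle$ isomorphic to ${\rm SU}_3(\mathbb{C})$, ${\rm Spin}_5(\mathbb{R})$ or ${\rm U}_2(\mathbb{H})$ (diagram $A_3$, $B_3$ or $C_3$ with node $2$ in the middle), where $M_2=M_{12}\cap M_{23}$, $M_1=M_{12}\cap M_{13}$, $M_3=M_{13}\cap M_{23}$. Put $D^1_2=N_{M_2}(M_1)$, the normalizer computed inside $M_{12}$, and $D^3_2=N_{M_2}(M_3)$, the normalizer computed inside $M_{23}$. Then $D^1_2=D^3_2$.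
   Context: Let $G$ be a simply connected compact semisimple Lie group with maximal torus $T$, root system $\Sigma$ of $G_{\mathbb{C}}$ relative to $T_{\mathbb{C}}$ and fundamental system $\Pi$; $G_\alpha$ ($\alpha\in\Pi$) denotes the semisimple rank-one subgroup corresponding to $\alpha$ and $G_{\alpha\beta}=\langle G_\alpha,G_\beta\rangle$. A Phan amalgam over $\Pi$ is an amalgam (set with partial multiplication which is the union of member groups, products defined only within members, intersections of members being subgroups) consisting of groups $L_\alpha$ and $L_{\alpha\beta}$ ($\alpha\ne\beta\in\Pi$) with each $L_{\alpha\beta}$ isomorphic to a central quotient of $G_{\alpha\beta}$ such that $L_\alpha,L_\beta$ are the images of $G_\alpha,G_\beta$. It is unambiguous if each $L_{\alpha\beta}\cong G_{\alpha\beta}$ in this way; irreducible if $\Pi$ is a fundamental system of an irreducible root system (connected Dynkin diagram); its rank is $|\Pi|$; it is strongly noncollapsing if there is a group $H$ and a map $\pi:\mathcal{A}\to H$ which is a homomorphism on every member group, with $\pi(\mathcal{A})$ generating $H$, such that the kernel of $\pi|_{L_\alpha}$ is central for every $\alpha\in\Pi$. Here the $L_\alpha$ are denoted $M_1,M_2,M_3$ and the $L_{\alpha\beta}$ are denoted $M_{ij}$. *)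

theory Defs
  imports "HOL-Analysis.Analysis" "HOL-Algebra.Algebra"
begin

definition cadj :: "complex^'n^'m \<Rightarrow> complex^'m^'n" where
  "cadj A = (\<chi> i j. cnj (A $ j $ i))"

definition SU_set :: "(complex^'n::finite^'n) set" where
  "SU_set = {A. A ** cadj A = mat 1 \<and> det A = 1}"

definition matgrp :: "(complex^'n::finite^'n) set \<Rightarrow> (complex^'n^'n) monoid" where
  "matgrp S = \<lparr>carrier = S, mult = (**), one = mat 1\<rparr>"

abbreviation SU2 :: "(complex^2^2) monoid" where "SU2 \<equiv> matgrp SU_set"
abbreviation SU3 :: "(complex^3^3) monoid" where "SU3 \<equiv> matgrp SU_set"

(* rank-one subgroups of SU_3(C) for the simple roots: upper-left and lower-right SU_2 blocks *)
definition SU3_G1 :: "(complex^3^3) set" where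
  "SU3_G1 = {A \<in> SU_set. A$1$3 = 0 \<and> A$2$3 = 0 \<and> A$3$1 = 0 \<and> A$3$2 = 0 \<and> A$3$3 = 1}"
definition SU3_G2 :: "(complex^3^3) set" where
  "SU3_G2 = {A \<in> SU_set. A$1$1 = 1 \<and> A$1$2 = 0 \<and> A$1$3 = 0 \<and> A$2$1 = 0 \<and> A$3$1 = 0}"

abbreviation SU2xSU2 :: "((complex^2^2) \<times> (complex^2^2)) monoid" where
  "SU2xSU2 \<equiv> SU2 \<times>\<times> SU2"
definition SU2xSU2_G1 :: "((complex^2^2) \<times> (complex^2^2)) set" where
  "SU2xSU2_G1 = SU_set \<times> {mat 1}"
definition SU2xSU2_G2 :: "((complex^2^2) \<times> (complex^2^2)) set" where
  "SU2xSU2_G2 = {mat 1} \<times> SU_set"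

(* U_2(H) = Sp(2) realized as the compact symplectic group U(4) \<inter> Sp_4(C),
   coordinates (1,2 | 3,4), symplectic form J *)
definition J4 :: "complex^4^4" where
  "J4 = (\<chi> i j. if i = 1 \<and> j = 3 then 1 else if i = 2 \<and> j = 4 then 1
               else if i = 3 \<and> j = 1 then -1 else if i = 4 \<and> j = 2 then -1 else 0)"
definition Sp2_set :: "(complex^4^4) set" where
  "Sp2_set = {A. A ** cadj A = mat 1 \<and> transpose A ** J4 ** A = J4}"
abbreviation Sp2 :: "(complex^4^4) monoid" where "Sp2 \<equiv> matgrp Sp2_set"

(* relative to the diagonal torus diag(t1,t2,t1^-1,t2^-1), simple roots e1-e2 (short), 2e2 (long) *)
(* short root SU_2: { diag(U, conj U) : U in SU_2 } *)
definition Sp2_short :: "(complex^4^4) set" where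
  "Sp2_short = (\<lambda>U::complex^2^2. \<chi> i j::4.
      let f = (\<lambda>k::4. if k = 1 \<or> k = 3 then (1::2) else 2) in
      if (i = 1 \<or> i = 2) \<and> (j = 1 \<or> j = 2) then U $ f i $ f j
      else if (i = 3 \<or> i = 4) \<and> (j = 3 \<or> j = 4) then cnj (U $ f i $ f j)
      else 0) ` SU_set"
definition Sp2_long :: "(complex^4^4) set" where
  "Sp2_long = {A \<in> Sp2_set. \<forall>i j. (i \<in> {1,3} \<or> j \<in> {1,3}) \<longrightarrow> A$i$j = (if i = j then 1 else 0)}"

end

theory Submission
  imports Defs
begin

text \<open>
  In each rank-two group \<open>G\<close> of the amalgam, with rank-one subgroups \<open>X\<close> and \<open>Y\<close>, the normalizer
  of \<open>X\<close> in \<open>Y\<close> is an abelian group (a torus of \<open>Y\<close>) which is the centralizer in \<open>Y\<close> of a single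
  element \<open>t\<close>, and some \<open>z \<in> X\<close> acts on \<open>Y\<close> exactly as \<open>t\<close> does. Moreover \<open>t\<close> is rigid: if, in a
  group \<open>H\<close> receiving \<open>G\<close> with central kernels on \<open>X\<close> and \<open>Y\<close>, an element \<open>h\<close> centralizes the image
  of \<open>X\<close> and induces on the image of \<open>Y\<close> the automorphism of some \<open>s \<in> Y\<close>, then \<open>s\<close> commutes with \<open>t\<close>.

  Take these data \<open>(z\<^sub>1, t\<^sub>1)\<close> in \<open>M\<^sub>1\<^sub>2\<close> for \<open>(M\<^sub>1, M\<^sub>2)\<close> and \<open>(z\<^sub>3, t\<^sub>3)\<close> in \<open>M\<^sub>2\<^sub>3\<close> for \<open>(M\<^sub>3, M\<^sub>2)\<close>.
  As \<open>M\<^sub>1\<close> and \<open>M\<^sub>3\<close> commute in \<open>M\<^sub>1\<^sub>3\<close>, the image of \<open>z\<^sub>3\<close> centralizes \<open>\<pi>(M\<^sub>1)\<close> and acts on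
  \<open>\<pi>(M\<^sub>2)\<close> as \<open>t\<^sub>3\<close>, so rigidity of \<open>t\<^sub>1\<close> puts \<open>t\<^sub>3\<close> into \<open>D\<^sup>1\<^sub>2\<close>; symmetrically \<open>t\<^sub>1 \<in> D\<^sup>3\<^sub>2\<close>. Both
  normalizers being abelian, each lies in the centralizer of the other's element, i.e. in the other.

  For rigidity, the
  commutator of \<open>s t s\<^sup>-\<^sup>1\<close> with a suitable \<open>x\<^sub>0 \<in> X\<close> lies in the kernel, hence is central in \<open>Y\<close>,
  which forces \<open>s\<close> to normalize the torus of \<open>Y\<close>; if \<open>s\<close> were a Weyl element, conjugating a torus
  element and its \<open>s\<close>-conjugate by a Weyl element of \<open>X\<close> would put a noncentral element of \<open>X\<close> into
  the kernel.
\<close>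

section \<open>Conjugation and commutation in groups\<close>

context group
begin

lemma inv_commute:
  assumes c: "h \<in> carrier G" "a \<in> carrier G" and ha: "h \<otimes> a = a \<otimes> h"
  shows "inv h \<otimes> a = a \<otimes> inv h"
proof -
  have "inv h \<otimes> a = inv h \<otimes> (a \<otimes> h) \<otimes> inv h" using c by (simp add: m_assoc)
  also have "\<dots> = inv h \<otimes> (h \<otimes> a) \<otimes> inv h" using ha by simp
  also have "\<dots> = a \<otimes> inv h" using c by (simp add: m_assoc[symmetric])
  finally show ?thesis .
qed

lemma commute_conj:
  assumes c: "h \<in> carrier G" "a \<in> carrier G" "b \<in> carrier G"
    and ha: "h \<otimes> a = a \<otimes> h" and ab: "a \<otimes> b = b \<otimes> a"
  shows "a \<otimes> (h \<otimes> b \<otimes> inv h) = h \<otimes> b \<otimes> inv h \<otimes> a"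
proof -
  have "a \<otimes> (h \<otimes> b \<otimes> inv h) = h \<otimes> (a \<otimes> b) \<otimes> inv h" using c ha by (simp add: m_assoc[symmetric])
  also have "\<dots> = h \<otimes> b \<otimes> (a \<otimes> inv h)" using c ab by (simp add: m_assoc)
  also have "\<dots> = h \<otimes> b \<otimes> inv h \<otimes> a" using c inv_commute[OF c(1,2) ha] by (simp add: m_assoc)
  finally show ?thesis .
qed

lemma conj_conj_commute:
  assumes c: "h \<in> carrier G" "a \<in> carrier G" "b \<in> carrier G" and ha: "h \<otimes> a = a \<otimes> h"
  shows "a \<otimes> (h \<otimes> b \<otimes> inv h) \<otimes> inv a = h \<otimes> (a \<otimes> b \<otimes> inv a) \<otimes> inv h"
proof -
  have hi: "inv h \<otimes> inv a = inv a \<otimes> inv h" using c ha by (metis inv_mult_group)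
  have "a \<otimes> (h \<otimes> b \<otimes> inv h) \<otimes> inv a = (a \<otimes> h) \<otimes> b \<otimes> (inv h \<otimes> inv a)" using c by (simp add: m_assoc)
  also have "\<dots> = (h \<otimes> a) \<otimes> b \<otimes> (inv a \<otimes> inv h)" using ha hi by simp
  also have "\<dots> = h \<otimes> (a \<otimes> b \<otimes> inv a) \<otimes> inv h" using c by (simp add: m_assoc)
  finally show ?thesis .
qed

lemma conj_mult_commute:
  assumes "h \<in> carrier G" "a \<in> carrier G" "b \<in> carrier G" and "h \<otimes> a = a \<otimes> h"
  shows "h \<otimes> (a \<otimes> b) \<otimes> inv h = a \<otimes> (h \<otimes> b \<otimes> inv h)"
  using assms by (simp add: m_assoc[symmetric])

lemma commutator_eq_one:
  assumes "a \<in> carrier G" "b \<in> carrier G" and "a \<otimes> b = b \<otimes> a"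
  shows "a \<otimes> b \<otimes> inv a \<otimes> inv b = \<one>"
  using assms by (simp add: m_assoc)

end

lemma (in group_hom) hom_conj:
  "a \<in> carrier G \<Longrightarrow> b \<in> carrier G \<Longrightarrow>
     h (a \<otimes>\<^bsub>G\<^esub> b \<otimes>\<^bsub>G\<^esub> inv\<^bsub>G\<^esub> a) = h a \<otimes>\<^bsub>H\<^esub> h b \<otimes>\<^bsub>H\<^esub> inv\<^bsub>H\<^esub> h a"
  by simp

lemma (in group_hom) hom_commute:
  assumes "a \<in> carrier G" "b \<in> carrier G" and ab: "a \<otimes>\<^bsub>G\<^esub> b = b \<otimes>\<^bsub>G\<^esub> a"
  shows "h a \<otimes>\<^bsub>H\<^esub> h b = h b \<otimes>\<^bsub>H\<^esub> h a"
proof -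
  have "h (a \<otimes>\<^bsub>G\<^esub> b) = h (b \<otimes>\<^bsub>G\<^esub> a)" by (simp only: ab)
  then show ?thesis using assms(1,2) by simp
qed

lemma (in group_hom) inj_commute_iff:
  assumes inj: "inj_on h (carrier G)" and a: "a \<in> carrier G" and b: "b \<in> carrier G"
  shows "h a \<otimes>\<^bsub>H\<^esub> h b = h b \<otimes>\<^bsub>H\<^esub> h a \<longleftrightarrow> a \<otimes>\<^bsub>G\<^esub> b = b \<otimes>\<^bsub>G\<^esub> a"
proof -
  have "h a \<otimes>\<^bsub>H\<^esub> h b = h (a \<otimes>\<^bsub>G\<^esub> b)" "h b \<otimes>\<^bsub>H\<^esub> h a = h (b \<otimes>\<^bsub>G\<^esub> a)" using a b by simp_all
  moreover have "h (a \<otimes>\<^bsub>G\<^esub> b) = h (b \<otimes>\<^bsub>G\<^esub> a) \<longleftrightarrow> a \<otimes>\<^bsub>G\<^esub> b = b \<otimes>\<^bsub>G\<^esub> a"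
    by (rule inj_on_eq_iff[OF inj]) (simp_all add: a b)
  ultimately show ?thesis by simp
qed

lemma inv_eq_on_common_subgroup:
  assumes A: "group A" and B: "group B" and SA: "subgroup S A" and SB: "subgroup S B"
    and c: "\<forall>x\<in>S. \<forall>y\<in>S. x \<otimes>\<^bsub>A\<^esub> y = x \<otimes>\<^bsub>B\<^esub> y" and x: "x \<in> S"
  shows "inv\<^bsub>A\<^esub> x = inv\<^bsub>B\<^esub> x"
proof -
  have oA: "\<one>\<^bsub>A\<^esub> \<in> S" using SA by (simp add: subgroup.one_closed)
  have oAc: "\<one>\<^bsub>A\<^esub> \<in> carrier B" using oA SB subgroup.subset by blast
  have "\<one>\<^bsub>A\<^esub> \<otimes>\<^bsub>B\<^esub> \<one>\<^bsub>A\<^esub> = \<one>\<^bsub>A\<^esub>"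
    using c oA A by (metis group.is_monoid monoid.l_one SA subgroup.subset subsetD)
  then have one: "\<one>\<^bsub>A\<^esub> = \<one>\<^bsub>B\<^esub>"
    using B oAc by (metis group.is_monoid group.l_cancel_one' monoid.one_closed)
  have iA: "inv\<^bsub>A\<^esub> x \<in> S" using SA x by (simp add: subgroup.m_inv_closed)
  have xA: "x \<in> carrier A" using SA x subgroup.subset by blast
  have "inv\<^bsub>A\<^esub> x \<otimes>\<^bsub>B\<^esub> x = \<one>\<^bsub>B\<^esub>" using c iA x one A xA by (metis group.l_inv)
  then show ?thesis using B SB iA x by (metis group.inv_equality subgroup.subset subsetD)
qed

lemma conj_image_eq_lr_coset: "g <#\<^bsub>G\<^esub> U #>\<^bsub>G\<^esub> a = (\<lambda>x. g \<otimes>\<^bsub>G\<^esub> x \<otimes>\<^bsub>G\<^esub> a) ` U"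
  by (auto simp: l_coset_def r_coset_def)

lemma normalizer_iff_conj_image:
  "U \<subseteq> carrier G \<Longrightarrow>
     g \<in> normalizer G U \<longleftrightarrow> g \<in> carrier G \<and> (\<lambda>x. g \<otimes>\<^bsub>G\<^esub> x \<otimes>\<^bsub>G\<^esub> inv\<^bsub>G\<^esub> g) ` U = U"
  by (auto simp: normalizer_def stabilizer_def conj_image_eq_lr_coset)

lemma iso_normalizer_iff:
  assumes G: "group G" and K: "group K" and iso: "\<phi> \<in> iso G K" and U: "U \<subseteq> carrier G"
    and g: "g \<in> carrier G"
  shows "\<phi> g \<in> normalizer K (\<phi> ` U) \<longleftrightarrow> g \<in> normalizer G U"
proof -
  interpret \<phi>: group_hom G K \<phi> using G K iso by (simp add: group_hom_def group_hom_axioms_def iso_def)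
  have inj: "inj_on \<phi> (carrier G)" using iso by (simp add: iso_def bij_betw_def)
  let ?c = "\<lambda>x. g \<otimes>\<^bsub>G\<^esub> x \<otimes>\<^bsub>G\<^esub> inv\<^bsub>G\<^esub> g"
  have "(\<lambda>x. \<phi> g \<otimes>\<^bsub>K\<^esub> \<phi> x \<otimes>\<^bsub>K\<^esub> inv\<^bsub>K\<^esub> \<phi> g) ` U = (\<lambda>x. \<phi> (?c x)) ` U"
    using U g by (intro image_cong refl) (simp add: \<phi>.hom_conj subset_iff)
  then have img: "(\<lambda>x. \<phi> g \<otimes>\<^bsub>K\<^esub> x \<otimes>\<^bsub>K\<^esub> inv\<^bsub>K\<^esub> \<phi> g) ` \<phi> ` U = \<phi> ` ?c ` U"
    by (simp add: image_image)
  have "?c ` U \<subseteq> carrier G" using U g by auto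
  then have "\<phi> ` ?c ` U = \<phi> ` U \<longleftrightarrow> ?c ` U = U" by (rule inj_on_image_eq_iff[OF inj _ U])
  moreover have "\<phi> ` U \<subseteq> carrier K" "\<phi> g \<in> carrier K" using U g by auto
  ultimately show ?thesis using U g img by (simp add: normalizer_iff_conj_image)
qed

section \<open>Rigid elements and torus data\<close>

definition central_kernel_on ::
    "('g, 'c) monoid_scheme \<Rightarrow> ('g \<Rightarrow> 'h) \<Rightarrow> ('h, 'd) monoid_scheme \<Rightarrow> 'g set \<Rightarrow> bool" where
  "central_kernel_on G \<pi> H U \<longleftrightarrow> (\<forall>x\<in>U. \<pi> x = \<one>\<^bsub>H\<^esub> \<longrightarrow> (\<forall>y\<in>U. x \<otimes>\<^bsub>G\<^esub> y = y \<otimes>\<^bsub>G\<^esub> x))"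

definition centralizes_induces ::
    "('g, 'c) monoid_scheme \<Rightarrow> ('g \<Rightarrow> 'h) \<Rightarrow> ('h, 'd) monoid_scheme \<Rightarrow> 'g set \<Rightarrow> 'g set \<Rightarrow> 'h \<Rightarrow> 'g
      \<Rightarrow> bool" where
  "centralizes_induces G \<pi> H U V h s \<longleftrightarrow> h \<in> carrier H \<and> (\<forall>x\<in>U. h \<otimes>\<^bsub>H\<^esub> \<pi> x = \<pi> x \<otimes>\<^bsub>H\<^esub> h) \<and>
     (\<forall>y\<in>V. h \<otimes>\<^bsub>H\<^esub> \<pi> y \<otimes>\<^bsub>H\<^esub> inv\<^bsub>H\<^esub> h = \<pi> (s \<otimes>\<^bsub>G\<^esub> y \<otimes>\<^bsub>G\<^esub> inv\<^bsub>G\<^esub> s))"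

text \<open>The type argument of \<open>rigid\<close> fixes the type of the groups \<open>H\<close> over which it quantifies.\<close>

definition rigid :: "'g monoid \<Rightarrow> 'g set \<Rightarrow> 'g set \<Rightarrow> 'g \<Rightarrow> 'h itself \<Rightarrow> bool" where
  "rigid G U V t T \<longleftrightarrow> (\<forall>(H::'h monoid) \<pi> h s. group H \<and> \<pi> \<in> hom G H \<and>
     central_kernel_on G \<pi> H U \<and> central_kernel_on G \<pi> H V \<and> s \<in> V \<and>
     centralizes_induces G \<pi> H U V h s \<longrightarrow> s \<otimes>\<^bsub>G\<^esub> t = t \<otimes>\<^bsub>G\<^esub> s)"

definition torus_datum :: "'g monoid \<Rightarrow> 'g set \<Rightarrow> 'g set \<Rightarrow> 'h itself \<Rightarrow> bool" where
  "torus_datum G U V T \<longleftrightarrow> (\<exists>z\<in>U. \<exists>t\<in>V.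
     (\<forall>y\<in>V. z \<otimes>\<^bsub>G\<^esub> y \<otimes>\<^bsub>G\<^esub> inv\<^bsub>G\<^esub> z = t \<otimes>\<^bsub>G\<^esub> y \<otimes>\<^bsub>G\<^esub> inv\<^bsub>G\<^esub> t) \<and>
     V \<inter> normalizer G U = {y\<in>V. y \<otimes>\<^bsub>G\<^esub> t = t \<otimes>\<^bsub>G\<^esub> y} \<and>
     (\<forall>a\<in>V \<inter> normalizer G U. \<forall>b\<in>V \<inter> normalizer G U. a \<otimes>\<^bsub>G\<^esub> b = b \<otimes>\<^bsub>G\<^esub> a) \<and>
     rigid G U V t T)"

lemma (in group_hom) central_kernel_on_inj:
  assumes inj: "inj_on h (carrier G)" and U: "U \<subseteq> carrier G"
    and k: "central_kernel_on H \<pi> K (h ` U)"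
  shows "central_kernel_on G (\<pi> \<circ> h) K U"
  unfolding central_kernel_on_def
proof (intro ballI impI)
  fix x y assume x: "x \<in> U" and "(\<pi> \<circ> h) x = \<one>\<^bsub>K\<^esub>" and y: "y \<in> U"
  then have "h x \<otimes>\<^bsub>H\<^esub> h y = h y \<otimes>\<^bsub>H\<^esub> h x" using k unfolding central_kernel_on_def by auto
  then show "x \<otimes>\<^bsub>G\<^esub> y = y \<otimes>\<^bsub>G\<^esub> x" using inj_commute_iff[OF inj, of x y] x y U by (simp add: subset_iff)
qed

lemma (in group_hom) centralizes_induces_comp:
  assumes U: "U \<subseteq> carrier G" and V: "V \<subseteq> carrier G" and s: "s \<in> carrier G"
    and ci: "centralizes_induces H \<pi> K (h ` U) (h ` V) g (h s)"
  shows "centralizes_induces G (\<pi> \<circ> h) K U V g s"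
  unfolding centralizes_induces_def
proof (intro conjI ballI)
  show "g \<in> carrier K" "\<And>x. x \<in> U \<Longrightarrow> g \<otimes>\<^bsub>K\<^esub> (\<pi> \<circ> h) x = (\<pi> \<circ> h) x \<otimes>\<^bsub>K\<^esub> g"
    using ci by (auto simp: centralizes_induces_def)
  fix y assume y: "y \<in> V"
  then have "g \<otimes>\<^bsub>K\<^esub> \<pi> (h y) \<otimes>\<^bsub>K\<^esub> inv\<^bsub>K\<^esub> g = \<pi> (h s \<otimes>\<^bsub>H\<^esub> h y \<otimes>\<^bsub>H\<^esub> inv\<^bsub>H\<^esub> h s)"
    using ci by (simp add: centralizes_induces_def)
  also have "h s \<otimes>\<^bsub>H\<^esub> h y \<otimes>\<^bsub>H\<^esub> inv\<^bsub>H\<^esub> h s = h (s \<otimes>\<^bsub>G\<^esub> y \<otimes>\<^bsub>G\<^esub> inv\<^bsub>G\<^esub> s)"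
    using y V s by (simp add: hom_conj subset_iff)
  finally show "g \<otimes>\<^bsub>K\<^esub> (\<pi> \<circ> h) y \<otimes>\<^bsub>K\<^esub> inv\<^bsub>K\<^esub> g = (\<pi> \<circ> h) (s \<otimes>\<^bsub>G\<^esub> y \<otimes>\<^bsub>G\<^esub> inv\<^bsub>G\<^esub> s)"
    by simp
qed

lemma rigid_iso:
  assumes G: "group G" and K: "group K" and iso: "\<phi> \<in> iso G K"
    and U: "U \<subseteq> carrier G" and V: "V \<subseteq> carrier G" and t: "t \<in> carrier G"
    and rig: "rigid G U V t (T::'h itself)"
  shows "rigid K (\<phi> ` U) (\<phi> ` V) (\<phi> t) T"
  unfolding rigid_def
proof (intro allI impI, elim conjE)
  fix H :: "'h monoid" and \<pi> h s'
  assume H: "group H" and \<pi>: "\<pi> \<in> hom K H" and kU: "central_kernel_on K \<pi> H (\<phi> ` U)"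
    and kV: "central_kernel_on K \<pi> H (\<phi> ` V)" and s': "s' \<in> \<phi> ` V"
    and ci: "centralizes_induces K \<pi> H (\<phi> ` U) (\<phi> ` V) h s'"
  interpret \<phi>: group_hom G K \<phi> using G K iso by (simp add: group_hom_def group_hom_axioms_def iso_def)
  have inj: "inj_on \<phi> (carrier G)" using iso by (simp add: iso_def bij_betw_def)
  obtain s where s: "s \<in> V" "s' = \<phi> s" using s' by auto
  have "\<pi> \<circ> \<phi> \<in> hom G H" using \<phi>.homh \<pi> by (rule hom_compose)
  moreover have "central_kernel_on G (\<pi> \<circ> \<phi>) H U" "central_kernel_on G (\<pi> \<circ> \<phi>) H V"
    using \<phi>.central_kernel_on_inj[OF inj U kU] \<phi>.central_kernel_on_inj[OF inj V kV] .
  moreover have "centralizes_induces G (\<pi> \<circ> \<phi>) H U V h s"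
    using \<phi>.centralizes_induces_comp[OF U V _ ci[unfolded s(2)]] s(1) V by blast
  ultimately have "s \<otimes>\<^bsub>G\<^esub> t = t \<otimes>\<^bsub>G\<^esub> s"
    using rig[unfolded rigid_def, THEN spec[of _ H], THEN spec[of _ "\<pi> \<circ> \<phi>"], THEN spec[of _ h],
        THEN spec[of _ s]] H s(1) by blast
  then show "s' \<otimes>\<^bsub>K\<^esub> \<phi> t = \<phi> t \<otimes>\<^bsub>K\<^esub> s'" using s V t \<phi>.inj_commute_iff[OF inj] by blast
qed

lemma torus_datum_iso:
  assumes G: "group G" and K: "group K" and iso: "\<phi> \<in> iso G K"
    and U: "U \<subseteq> carrier G" and V: "V \<subseteq> carrier G" and datum: "torus_datum G U V (T::'h itself)"
  shows "torus_datum K (\<phi> ` U) (\<phi> ` V) T"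
proof -
  interpret \<phi>: group_hom G K \<phi> using G K iso by (simp add: group_hom_def group_hom_axioms_def iso_def)
  have inj: "inj_on \<phi> (carrier G)" using iso by (simp add: iso_def bij_betw_def)
  obtain z t where z: "z \<in> U" and t: "t \<in> V"
    and acts: "\<forall>y\<in>V. z \<otimes>\<^bsub>G\<^esub> y \<otimes>\<^bsub>G\<^esub> inv\<^bsub>G\<^esub> z = t \<otimes>\<^bsub>G\<^esub> y \<otimes>\<^bsub>G\<^esub> inv\<^bsub>G\<^esub> t"
    and D: "V \<inter> normalizer G U = {y\<in>V. y \<otimes>\<^bsub>G\<^esub> t = t \<otimes>\<^bsub>G\<^esub> y}"
    and ab: "\<forall>a\<in>V \<inter> normalizer G U. \<forall>b\<in>V \<inter> normalizer G U. a \<otimes>\<^bsub>G\<^esub> b = b \<otimes>\<^bsub>G\<^esub> a"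
    and rig: "rigid G U V t T"
    using datum unfolding torus_datum_def by blast
  have zG: "z \<in> carrier G" and tG: "t \<in> carrier G" using z t U V by auto
  have N: "\<phi> y \<in> normalizer K (\<phi> ` U) \<longleftrightarrow> y \<in> normalizer G U" if "y \<in> V" for y
    using iso_normalizer_iff[OF G K iso U] that V by blast
  have comm: "\<phi> a \<otimes>\<^bsub>K\<^esub> \<phi> b = \<phi> b \<otimes>\<^bsub>K\<^esub> \<phi> a \<longleftrightarrow> a \<otimes>\<^bsub>G\<^esub> b = b \<otimes>\<^bsub>G\<^esub> a" if "a \<in> V" "b \<in> V" for a b
    using that V \<phi>.inj_commute_iff[OF inj] by blast
  have "\<phi> z \<otimes>\<^bsub>K\<^esub> \<phi> y \<otimes>\<^bsub>K\<^esub> inv\<^bsub>K\<^esub> \<phi> z = \<phi> t \<otimes>\<^bsub>K\<^esub> \<phi> y \<otimes>\<^bsub>K\<^esub> inv\<^bsub>K\<^esub> \<phi> t" if "y \<in> V" for y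
  proof -
    have "\<phi> (z \<otimes>\<^bsub>G\<^esub> y \<otimes>\<^bsub>G\<^esub> inv\<^bsub>G\<^esub> z) = \<phi> (t \<otimes>\<^bsub>G\<^esub> y \<otimes>\<^bsub>G\<^esub> inv\<^bsub>G\<^esub> t)"
      using acts that by simp
    then show ?thesis using zG tG that V by (simp add: subset_iff)
  qed
  moreover have "\<phi> ` V \<inter> normalizer K (\<phi> ` U) = {y\<in>\<phi> ` V. y \<otimes>\<^bsub>K\<^esub> \<phi> t = \<phi> t \<otimes>\<^bsub>K\<^esub> y}"
  proof (intro equalityI subsetI)
    fix y' assume "y' \<in> \<phi> ` V \<inter> normalizer K (\<phi> ` U)"
    then obtain y where "y \<in> V" "y' = \<phi> y" "y \<in> normalizer G U" using N by auto
    then show "y' \<in> {y\<in>\<phi> ` V. y \<otimes>\<^bsub>K\<^esub> \<phi> t = \<phi> t \<otimes>\<^bsub>K\<^esub> y}" using D comm[OF _ t] by auto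
  next
    fix y' assume "y' \<in> {y\<in>\<phi> ` V. y \<otimes>\<^bsub>K\<^esub> \<phi> t = \<phi> t \<otimes>\<^bsub>K\<^esub> y}"
    then obtain y where "y \<in> V" "y' = \<phi> y" "y \<otimes>\<^bsub>G\<^esub> t = t \<otimes>\<^bsub>G\<^esub> y" using comm[OF _ t] by auto
    then show "y' \<in> \<phi> ` V \<inter> normalizer K (\<phi> ` U)" using D N by auto
  qed
  moreover have "\<forall>a\<in>\<phi> ` V \<inter> normalizer K (\<phi> ` U). \<forall>b\<in>\<phi> ` V \<inter> normalizer K (\<phi> ` U).
      a \<otimes>\<^bsub>K\<^esub> b = b \<otimes>\<^bsub>K\<^esub> a"
  proof (intro ballI)
    fix a' b' assume "a' \<in> \<phi> ` V \<inter> normalizer K (\<phi> ` U)" "b' \<in> \<phi> ` V \<inter> normalizer K (\<phi> ` U)"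
    then obtain a b where "a \<in> V \<inter> normalizer G U" "b \<in> V \<inter> normalizer G U" "a' = \<phi> a" "b' = \<phi> b"
      using N by auto
    then show "a' \<otimes>\<^bsub>K\<^esub> b' = b' \<otimes>\<^bsub>K\<^esub> a'" using ab comm by auto
  qed
  moreover have "rigid K (\<phi> ` U) (\<phi> ` V) (\<phi> t) T" using rigid_iso[OF G K iso U V tG rig] .
  ultimately show ?thesis using z t unfolding torus_datum_def by blast
qed

lemma (in group_hom) induced_conj_commutator_in_kernel:
  assumes ci: "centralizes_induces G h H U V g s"
    and U: "U \<subseteq> carrier G" and V: "V \<subseteq> carrier G" and s: "s \<in> carrier G"
    and x0: "x0 \<in> U" and t: "t \<in> V" and comm: "x0 \<otimes>\<^bsub>G\<^esub> t = t \<otimes>\<^bsub>G\<^esub> x0"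
  shows "h (x0 \<otimes>\<^bsub>G\<^esub> (s \<otimes>\<^bsub>G\<^esub> t \<otimes>\<^bsub>G\<^esub> inv\<^bsub>G\<^esub> s) \<otimes>\<^bsub>G\<^esub> inv\<^bsub>G\<^esub> x0 \<otimes>\<^bsub>G\<^esub>
      inv\<^bsub>G\<^esub> (s \<otimes>\<^bsub>G\<^esub> t \<otimes>\<^bsub>G\<^esub> inv\<^bsub>G\<^esub> s)) = \<one>\<^bsub>H\<^esub>"
proof -
  have g: "g \<in> carrier H" and gU: "g \<otimes>\<^bsub>H\<^esub> h x0 = h x0 \<otimes>\<^bsub>H\<^esub> g"
    and gV: "g \<otimes>\<^bsub>H\<^esub> h t \<otimes>\<^bsub>H\<^esub> inv\<^bsub>H\<^esub> g = h (s \<otimes>\<^bsub>G\<^esub> t \<otimes>\<^bsub>G\<^esub> inv\<^bsub>G\<^esub> s)"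
    using ci x0 t unfolding centralizes_induces_def by auto
  have x0G: "x0 \<in> carrier G" and tG: "t \<in> carrier G" using x0 t U V by auto
  define y' where "y' = s \<otimes>\<^bsub>G\<^esub> t \<otimes>\<^bsub>G\<^esub> inv\<^bsub>G\<^esub> s"
  have y'G: "y' \<in> carrier G" using s tG by (simp add: y'_def)
  \<comment> \<open>\<open>h y'\<close> is the conjugate of \<open>h t\<close> by \<open>g\<close>, and \<open>g\<close> centralizes \<open>h x0\<close>.\<close>
  have "h x0 \<otimes>\<^bsub>H\<^esub> h y' = h y' \<otimes>\<^bsub>H\<^esub> h x0"
    using H.commute_conj[OF g _ _ gU hom_commute[OF x0G tG comm]] gV x0G tG by (simp add: y'_def)
  then have "h x0 \<otimes>\<^bsub>H\<^esub> h y' \<otimes>\<^bsub>H\<^esub> inv\<^bsub>H\<^esub> h x0 \<otimes>\<^bsub>H\<^esub> inv\<^bsub>H\<^esub> h y' = \<one>\<^bsub>H\<^esub>"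
    using x0G y'G by (intro H.commutator_eq_one) simp_all
  then show ?thesis using x0G y'G by (simp add: y'_def[symmetric])
qed

lemma (in group_hom) induced_conj_weyl_images_eq:
  assumes ci: "centralizes_induces G h H U V g s"
    and U: "U \<subseteq> carrier G" and V: "V \<subseteq> carrier G" and s: "s \<in> carrier G"
    and n: "n \<in> U" and u: "u \<in> U" "u' \<in> U" and d: "d \<in> V" and sd: "s \<otimes>\<^bsub>G\<^esub> d \<otimes>\<^bsub>G\<^esub> inv\<^bsub>G\<^esub> s = d'"
    and nd: "n \<otimes>\<^bsub>G\<^esub> d \<otimes>\<^bsub>G\<^esub> inv\<^bsub>G\<^esub> n = u \<otimes>\<^bsub>G\<^esub> d"
    and nd': "n \<otimes>\<^bsub>G\<^esub> d' \<otimes>\<^bsub>G\<^esub> inv\<^bsub>G\<^esub> n = u' \<otimes>\<^bsub>G\<^esub> d'"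
  shows "h u = h u'"
proof -
  have g: "g \<in> carrier H" and gU: "\<And>x. x \<in> U \<Longrightarrow> g \<otimes>\<^bsub>H\<^esub> h x = h x \<otimes>\<^bsub>H\<^esub> g"
    and gd: "g \<otimes>\<^bsub>H\<^esub> h d \<otimes>\<^bsub>H\<^esub> inv\<^bsub>H\<^esub> g = h d'"
    using ci d sd unfolding centralizes_induces_def by auto
  have c: "n \<in> carrier G" "u \<in> carrier G" "u' \<in> carrier G" "d \<in> carrier G" "d' \<in> carrier G"
    using n u d U V s sd by auto
  have "h u' \<otimes>\<^bsub>H\<^esub> h d' = h n \<otimes>\<^bsub>H\<^esub> h d' \<otimes>\<^bsub>H\<^esub> inv\<^bsub>H\<^esub> h n" using arg_cong[OF nd', of h] c by simp
  also have "\<dots> = g \<otimes>\<^bsub>H\<^esub> (h n \<otimes>\<^bsub>H\<^esub> h d \<otimes>\<^bsub>H\<^esub> inv\<^bsub>H\<^esub> h n) \<otimes>\<^bsub>H\<^esub> inv\<^bsub>H\<^esub> g"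
    unfolding gd[symmetric] using c by (intro H.conj_conj_commute g gU n) simp_all
  also have "h n \<otimes>\<^bsub>H\<^esub> h d \<otimes>\<^bsub>H\<^esub> inv\<^bsub>H\<^esub> h n = h u \<otimes>\<^bsub>H\<^esub> h d" using arg_cong[OF nd, of h] c by simp
  also have "g \<otimes>\<^bsub>H\<^esub> (h u \<otimes>\<^bsub>H\<^esub> h d) \<otimes>\<^bsub>H\<^esub> inv\<^bsub>H\<^esub> g = h u \<otimes>\<^bsub>H\<^esub> h d'"
    unfolding gd[symmetric] using c by (intro H.conj_mult_commute g gU u) simp_all
  finally show ?thesis using c H.right_cancel[of "h d'" "h u'" "h u"] by simp
qed

lemma rigidI:
  assumes G: "group G" and U: "subgroup U G" and V: "subgroup V G"
    and t: "t \<in> V" and x0: "x0 \<in> U" "x0 \<otimes>\<^bsub>G\<^esub> t = t \<otimes>\<^bsub>G\<^esub> x0"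
    and x0_conj: "\<And>y. y \<in> V \<Longrightarrow> x0 \<otimes>\<^bsub>G\<^esub> y \<otimes>\<^bsub>G\<^esub> inv\<^bsub>G\<^esub> x0 \<in> V"
    and dichotomy: "\<And>s e. s \<in> V \<Longrightarrow> e \<in> V \<Longrightarrow> \<forall>y\<in>V. e \<otimes>\<^bsub>G\<^esub> y = y \<otimes>\<^bsub>G\<^esub> e \<Longrightarrow>
        e \<otimes>\<^bsub>G\<^esub> (s \<otimes>\<^bsub>G\<^esub> t \<otimes>\<^bsub>G\<^esub> inv\<^bsub>G\<^esub> s) = x0 \<otimes>\<^bsub>G\<^esub> (s \<otimes>\<^bsub>G\<^esub> t \<otimes>\<^bsub>G\<^esub> inv\<^bsub>G\<^esub> s) \<otimes>\<^bsub>G\<^esub> inv\<^bsub>G\<^esub> x0 \<Longrightarrow>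
        s \<otimes>\<^bsub>G\<^esub> t = t \<otimes>\<^bsub>G\<^esub> s \<or> s \<otimes>\<^bsub>G\<^esub> d \<otimes>\<^bsub>G\<^esub> inv\<^bsub>G\<^esub> s = d'"
    and weyl: "n \<in> U" "u \<in> U" "u' \<in> U" "d \<in> V" "d' \<in> V"
      "n \<otimes>\<^bsub>G\<^esub> d \<otimes>\<^bsub>G\<^esub> inv\<^bsub>G\<^esub> n = u \<otimes>\<^bsub>G\<^esub> d" "n \<otimes>\<^bsub>G\<^esub> d' \<otimes>\<^bsub>G\<^esub> inv\<^bsub>G\<^esub> n = u' \<otimes>\<^bsub>G\<^esub> d'"
      "u \<otimes>\<^bsub>G\<^esub> inv\<^bsub>G\<^esub> u' \<otimes>\<^bsub>G\<^esub> n \<noteq> n \<otimes>\<^bsub>G\<^esub> (u \<otimes>\<^bsub>G\<^esub> inv\<^bsub>G\<^esub> u')"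
  shows "rigid G U V t T"
  unfolding rigid_def
proof (intro allI impI, elim conjE)
  fix H :: "'h monoid" and \<pi> h s
  assume H: "group H" and \<pi>: "\<pi> \<in> hom G H" and kU: "central_kernel_on G \<pi> H U"
    and kV: "central_kernel_on G \<pi> H V" and s: "s \<in> V" and ci: "centralizes_induces G \<pi> H U V h s"
  interpret G: group G by (rule G)
  interpret \<pi>: group_hom G H \<pi> using G H \<pi> by (simp add: group_hom_def group_hom_axioms_def)
  have UG: "U \<subseteq> carrier G" and VG: "V \<subseteq> carrier G" and sG: "s \<in> carrier G"
    using U V s by (auto dest: subgroup.subset subgroup.mem_carrier)
  have "s \<otimes>\<^bsub>G\<^esub> t = t \<otimes>\<^bsub>G\<^esub> s \<or> s \<otimes>\<^bsub>G\<^esub> d \<otimes>\<^bsub>G\<^esub> inv\<^bsub>G\<^esub> s = d'"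
  proof -
    define y' where "y' = s \<otimes>\<^bsub>G\<^esub> t \<otimes>\<^bsub>G\<^esub> inv\<^bsub>G\<^esub> s"
    define e where "e = x0 \<otimes>\<^bsub>G\<^esub> y' \<otimes>\<^bsub>G\<^esub> inv\<^bsub>G\<^esub> x0 \<otimes>\<^bsub>G\<^esub> inv\<^bsub>G\<^esub> y'"
    have y': "y' \<in> V" using V s t by (simp add: y'_def subgroup.m_closed subgroup.m_inv_closed)
    have e: "e \<in> V" using V y' x0_conj by (simp add: e_def subgroup.m_closed subgroup.m_inv_closed)
    have "\<pi> e = \<one>\<^bsub>H\<^esub>"
      unfolding e_def y'_def by (rule \<pi>.induced_conj_commutator_in_kernel[OF ci UG VG sG x0(1) t x0(2)])
    then have central: "\<forall>y\<in>V. e \<otimes>\<^bsub>G\<^esub> y = y \<otimes>\<^bsub>G\<^esub> e" using kV e unfolding central_kernel_on_def by blast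
    have "x0 \<in> carrier G" "y' \<in> carrier G" using x0(1) y' UG VG by auto
    then have "e \<otimes>\<^bsub>G\<^esub> y' = x0 \<otimes>\<^bsub>G\<^esub> y' \<otimes>\<^bsub>G\<^esub> inv\<^bsub>G\<^esub> x0" by (simp add: e_def G.m_assoc)
    with central show ?thesis using dichotomy[OF s e] unfolding y'_def by blast
  qed
  moreover have "s \<otimes>\<^bsub>G\<^esub> d \<otimes>\<^bsub>G\<^esub> inv\<^bsub>G\<^esub> s \<noteq> d'"
  proof
    assume "s \<otimes>\<^bsub>G\<^esub> d \<otimes>\<^bsub>G\<^esub> inv\<^bsub>G\<^esub> s = d'"
    then have "\<pi> u = \<pi> u'" by (rule \<pi>.induced_conj_weyl_images_eq[OF ci UG VG sG weyl(1-4) _ weyl(6,7)])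
    moreover have "u \<in> carrier G" "u' \<in> carrier G" using weyl(2,3) UG by auto
    ultimately have "\<pi> (u \<otimes>\<^bsub>G\<^esub> inv\<^bsub>G\<^esub> u') = \<one>\<^bsub>H\<^esub>" by simp
    moreover have "u \<otimes>\<^bsub>G\<^esub> inv\<^bsub>G\<^esub> u' \<in> U" using U weyl(2,3) by (simp add: subgroup.m_closed subgroup.m_inv_closed)
    ultimately show False using kU weyl(1,8) unfolding central_kernel_on_def by blast
  qed
  ultimately show "s \<otimes>\<^bsub>G\<^esub> t = t \<otimes>\<^bsub>G\<^esub> s" by blast
qed

section \<open>Matrix groups inverted by the conjugate transpose\<close>

lemma cadj_nth [simp]: "cadj A $ i $ j = cnj (A $ j $ i)"
  by (simp add: cadj_def)

lemma cadj_matrix_mult: "cadj (A ** B) = cadj B ** cadj A"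
  by (simp add: vec_eq_iff matrix_matrix_mult_def cadj_def mult.commute)

lemma cadj_cadj [simp]: "cadj (cadj A) = A"
  by (simp add: vec_eq_iff)

lemma cadj_mat_one [simp]: "cadj (mat 1 :: complex^'n^'n) = mat 1"
  by (simp add: vec_eq_iff mat_def)

lemma mat_one_nth: "(mat 1 :: complex^'n^'n) $ i $ j = (if i = j then 1 else 0)"
  by (simp add: mat_def)

lemma matgrp_simps [simp]: "carrier (matgrp S) = S" "mult (matgrp S) = (**)" "one (matgrp S) = mat 1"
  by (simp_all add: matgrp_def)

lemma SU_mult_cadj: "A \<in> SU_set \<Longrightarrow> A ** cadj A = mat 1"
  by (simp add: SU_set_def)

lemma SU_cadj_mult: "A \<in> SU_set \<Longrightarrow> cadj A ** A = mat 1"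
  by (simp add: SU_set_def matrix_left_right_inverse)

lemma SU_mult_closed: "A \<in> SU_set \<Longrightarrow> B \<in> SU_set \<Longrightarrow> A ** B \<in> SU_set"
proof -
  assume A: "A \<in> SU_set" and B: "B \<in> SU_set"
  have "A ** B ** cadj (A ** B) = A ** (B ** cadj B) ** cadj A"
    by (simp add: cadj_matrix_mult matrix_mul_assoc)
  also have "\<dots> = mat 1" using A B by (simp add: SU_set_def)
  finally show ?thesis using A B by (simp add: SU_set_def det_mul)
qed

lemma SU_cadj_closed: "A \<in> SU_set \<Longrightarrow> cadj A \<in> SU_set"
proof -
  assume A: "A \<in> SU_set"
  have "det A * det (cadj A) = 1" using A det_mul[of A "cadj A"] by (simp add: SU_set_def)
  then show ?thesis using A by (simp add: SU_set_def SU_cadj_mult)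
qed

lemma SU_one: "mat 1 \<in> SU_set"
  by (simp add: SU_set_def)

lemma group_SU: "group (matgrp (SU_set :: (complex^'n::finite^'n) set))"
  by (rule groupI)
    (auto simp: SU_mult_closed SU_one matrix_mul_assoc intro!: bexI[of _ "cadj _"] SU_cadj_closed SU_cadj_mult)

lemma SU_inv: "A \<in> SU_set \<Longrightarrow> inv\<^bsub>matgrp SU_set\<^esub> A = cadj A"
  by (rule group.inv_equality[OF group_SU]) (auto simp: SU_cadj_mult SU_cadj_closed)

lemma Sp2_mult_cadj: "A \<in> Sp2_set \<Longrightarrow> A ** cadj A = mat 1"
  by (simp add: Sp2_set_def)

lemma Sp2_cadj_mult: "A \<in> Sp2_set \<Longrightarrow> cadj A ** A = mat 1"
  by (simp add: Sp2_set_def matrix_left_right_inverse)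

lemma Sp2_mult_closed: "A \<in> Sp2_set \<Longrightarrow> B \<in> Sp2_set \<Longrightarrow> A ** B \<in> Sp2_set"
proof -
  assume A: "A \<in> Sp2_set" and B: "B \<in> Sp2_set"
  have "A ** B ** cadj (A ** B) = A ** (B ** cadj B) ** cadj A"
    by (simp add: cadj_matrix_mult matrix_mul_assoc)
  also have "\<dots> = mat 1" using A B by (simp add: Sp2_set_def)
  finally have "A ** B ** cadj (A ** B) = mat 1" .
  moreover have "transpose (A ** B) ** J4 ** (A ** B) = transpose B ** (transpose A ** J4 ** A) ** B"
    by (simp add: matrix_transpose_mul matrix_mul_assoc)
  ultimately show ?thesis using A B by (simp add: Sp2_set_def)
qed

lemma Sp2_cadj_closed: "A \<in> Sp2_set \<Longrightarrow> cadj A \<in> Sp2_set"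
proof -
  assume A: "A \<in> Sp2_set"
  have "transpose (cadj A) ** J4 ** cadj A = transpose (cadj A) ** (transpose A ** J4 ** A) ** cadj A"
    using A by (simp add: Sp2_set_def)
  also have "\<dots> = transpose (A ** cadj A) ** J4 ** (A ** cadj A)"
    by (simp add: matrix_transpose_mul matrix_mul_assoc)
  finally show ?thesis using A by (simp add: Sp2_set_def Sp2_cadj_mult)
qed

lemma Sp2_one: "mat 1 \<in> Sp2_set"
  by (simp add: Sp2_set_def)

lemma group_Sp2: "group Sp2"
  by (rule groupI)
    (auto simp: Sp2_mult_closed Sp2_one matrix_mul_assoc intro!: bexI[of _ "cadj _"] Sp2_cadj_closed Sp2_cadj_mult)

lemma Sp2_inv: "A \<in> Sp2_set \<Longrightarrow> inv\<^bsub>Sp2\<^esub> A = cadj A"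
  by (rule group.inv_equality[OF group_Sp2]) (auto simp: Sp2_cadj_mult Sp2_cadj_closed)

locale unitary_group =
  fixes C :: "(complex^'n::finite^'n) set"
  assumes group_matgrp: "group (matgrp C)"
    and inv_eq_cadj: "A \<in> C \<Longrightarrow> inv\<^bsub>matgrp C\<^esub> A = cadj A"
begin

lemma cadj_mult_eq: "A \<in> C \<Longrightarrow> cadj A ** A = mat 1"
  using group.l_inv[OF group_matgrp, of A] by (simp add: inv_eq_cadj)

lemma mult_cadj_eq: "A \<in> C \<Longrightarrow> A ** cadj A = mat 1"
  using group.r_inv[OF group_matgrp, of A] by (simp add: inv_eq_cadj)

lemma subgroup_matgrpI:
  assumes "S \<subseteq> C" "mat 1 \<in> S" "\<And>A B. A \<in> S \<Longrightarrow> B \<in> S \<Longrightarrow> A ** B \<in> S" "\<And>A. A \<in> S \<Longrightarrow> cadj A \<in> S"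
  shows "subgroup S (matgrp C)"
  using assms by unfold_locales (auto simp: inv_eq_cadj)

lemma normalizer_iff:
  "S \<subseteq> C \<Longrightarrow> y \<in> C \<Longrightarrow> y \<in> normalizer (matgrp C) S \<longleftrightarrow> (\<lambda>x. y ** x ** cadj y) ` S = S"
  using normalizer_iff_conj_image[of S "matgrp C" y] by (simp add: inv_eq_cadj)

lemma conj_image_eqI:
  assumes y: "y \<in> C" and "\<And>x. x \<in> S \<Longrightarrow> y ** x ** cadj y \<in> S'"
    and "\<And>x. x \<in> S' \<Longrightarrow> cadj y ** x ** cadj (cadj y) \<in> S"
  shows "(\<lambda>x. y ** x ** cadj y) ` S = S'"
proof (intro equalityI subsetI)
  fix w assume "w \<in> (\<lambda>x. y ** x ** cadj y) ` S"
  then show "w \<in> S'" using assms(2) by auto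
next
  fix w assume w: "w \<in> S'"
  have "y ** (cadj y ** w ** y) ** cadj y = (y ** cadj y) ** w ** (y ** cadj y)"
    by (simp add: matrix_mul_assoc)
  then have "w = y ** (cadj y ** w ** y) ** cadj y" using mult_cadj_eq[OF y] by simp
  moreover have "cadj y ** w ** y \<in> S" using assms(3)[OF w] by simp
  ultimately show "w \<in> (\<lambda>x. y ** x ** cadj y) ` S" by (rule image_eqI)
qed

lemma conj_image_eqD:
  assumes im: "(\<lambda>x. y ** x ** cadj y) ` S = S" and y: "y \<in> C" and w: "w \<in> S"
  shows "y ** w ** cadj y \<in> S" "cadj y ** w ** y \<in> S"
proof -
  show "y ** w ** cadj y \<in> S" using im w by blast
  have "w \<in> (\<lambda>x. y ** x ** cadj y) ` S" using im w by simp
  then obtain x where x: "x \<in> S" "w = y ** x ** cadj y" by blast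
  have "cadj y ** w ** y = (cadj y ** y) ** x ** (cadj y ** y)"
    by (simp add: x(2) matrix_mul_assoc)
  then show "cadj y ** w ** y \<in> S" using x cadj_mult_eq[OF y] by simp
qed

lemma conj_iso:
  assumes g: "g \<in> C"
  shows "(\<lambda>A. g ** A ** cadj g) \<in> iso (matgrp C) (matgrp C)"
proof -
  have mult: "A ** B \<in> C" if "A \<in> C" "B \<in> C" for A B
    using monoid.m_closed[OF group.is_monoid[OF group_matgrp]] that by fastforce
  have cadj: "cadj A \<in> C" if "A \<in> C" for A
    using group.inv_closed[OF group_matgrp] inv_eq_cadj that by fastforce
  have cancel: "M ** cadj g ** g = M" "M ** g ** cadj g = M" for M
    by (simp_all add: matrix_mul_assoc[symmetric] cadj_mult_eq[OF g] mult_cadj_eq[OF g])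
  note simps = matrix_mul_assoc cancel cadj_mult_eq[OF g] mult_cadj_eq[OF g]
  have "(\<lambda>A. g ** A ** cadj g) \<in> hom (matgrp C) (matgrp C)"
    by (rule homI) (simp_all add: simps g mult cadj)
  moreover have "bij_betw (\<lambda>A. g ** A ** cadj g) C C"
    by (rule bij_betw_byWitness[where f' = "\<lambda>A. cadj g ** A ** g"]) (auto simp: simps g mult cadj)
  ultimately show ?thesis by (simp add: iso_def)
qed

lemma rigid_matgrpI:
  assumes U: "subgroup U (matgrp C)" and V: "subgroup V (matgrp C)"
    and t: "t \<in> V" and x0: "x0 \<in> U" "x0 ** t = t ** x0" "\<And>y. y \<in> V \<Longrightarrow> x0 ** y ** cadj x0 \<in> V"
    and dichotomy: "\<And>s e. s \<in> V \<Longrightarrow> e \<in> V \<Longrightarrow> \<forall>y\<in>V. e ** y = y ** e \<Longrightarrow>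
        e ** (s ** t ** cadj s) = x0 ** (s ** t ** cadj s) ** cadj x0 \<Longrightarrow>
        s ** t = t ** s \<or> s ** d ** cadj s = d'"
    and weyl: "n \<in> U" "u \<in> U" "u' \<in> U" "d \<in> V" "d' \<in> V"
      "n ** d ** cadj n = u ** d" "n ** d' ** cadj n = u' ** d'" "u ** cadj u' ** n \<noteq> n ** (u ** cadj u')"
  shows "rigid (matgrp C) U V t T"
proof -
  have inv: "\<And>x. x \<in> U \<Longrightarrow> inv\<^bsub>matgrp C\<^esub> x = cadj x" "\<And>y. y \<in> V \<Longrightarrow> inv\<^bsub>matgrp C\<^esub> y = cadj y"
    using U V inv_eq_cadj by (auto dest: subgroup.mem_carrier)
  show ?thesis
  proof (rule rigidI[OF group_matgrp U V t x0(1)])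
    show "x0 \<otimes>\<^bsub>matgrp C\<^esub> t = t \<otimes>\<^bsub>matgrp C\<^esub> x0" using x0(2) by simp
    show "x0 \<otimes>\<^bsub>matgrp C\<^esub> y \<otimes>\<^bsub>matgrp C\<^esub> inv\<^bsub>matgrp C\<^esub> x0 \<in> V" if "y \<in> V" for y
      using x0(1,3) that by (simp add: inv)
    show "s \<otimes>\<^bsub>matgrp C\<^esub> t = t \<otimes>\<^bsub>matgrp C\<^esub> s \<or> s \<otimes>\<^bsub>matgrp C\<^esub> d \<otimes>\<^bsub>matgrp C\<^esub> inv\<^bsub>matgrp C\<^esub> s = d'"
      if "s \<in> V" "e \<in> V" "\<forall>y\<in>V. e \<otimes>\<^bsub>matgrp C\<^esub> y = y \<otimes>\<^bsub>matgrp C\<^esub> e"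
        "e \<otimes>\<^bsub>matgrp C\<^esub> (s \<otimes>\<^bsub>matgrp C\<^esub> t \<otimes>\<^bsub>matgrp C\<^esub> inv\<^bsub>matgrp C\<^esub> s) =
         x0 \<otimes>\<^bsub>matgrp C\<^esub> (s \<otimes>\<^bsub>matgrp C\<^esub> t \<otimes>\<^bsub>matgrp C\<^esub> inv\<^bsub>matgrp C\<^esub> s) \<otimes>\<^bsub>matgrp C\<^esub> inv\<^bsub>matgrp C\<^esub> x0"
      for s e
    proof -
      have "\<forall>y\<in>V. e ** y = y ** e" using that(3) by simp
      moreover have "e ** (s ** t ** cadj s) = x0 ** (s ** t ** cadj s) ** cadj x0"
        using that(1,4) x0(1) by (simp add: inv)
      ultimately have "s ** t = t ** s \<or> s ** d ** cadj s = d'" by (rule dichotomy[OF that(1,2)])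
      then show ?thesis using that(1) by (simp add: inv)
    qed
    show "n \<otimes>\<^bsub>matgrp C\<^esub> d \<otimes>\<^bsub>matgrp C\<^esub> inv\<^bsub>matgrp C\<^esub> n = u \<otimes>\<^bsub>matgrp C\<^esub> d"
      "n \<otimes>\<^bsub>matgrp C\<^esub> d' \<otimes>\<^bsub>matgrp C\<^esub> inv\<^bsub>matgrp C\<^esub> n = u' \<otimes>\<^bsub>matgrp C\<^esub> d'"
      "u \<otimes>\<^bsub>matgrp C\<^esub> inv\<^bsub>matgrp C\<^esub> u' \<otimes>\<^bsub>matgrp C\<^esub> n \<noteq>
       n \<otimes>\<^bsub>matgrp C\<^esub> (u \<otimes>\<^bsub>matgrp C\<^esub> inv\<^bsub>matgrp C\<^esub> u')"
      using weyl by (simp_all add: inv)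
  qed (use weyl in simp_all)
qed

lemma torus_datum_matgrpI:
  assumes U: "U \<subseteq> C" and V: "V \<subseteq> C" and z: "z \<in> U" and t: "t \<in> V"
    and acts: "\<And>y. y \<in> V \<Longrightarrow> z ** y ** cadj z = t ** y ** cadj t"
    and normalizes: "\<And>y. y \<in> V \<Longrightarrow> (\<lambda>x. y ** x ** cadj y) ` U = U \<longleftrightarrow> y ** t = t ** y"
    and abelian: "\<And>a b. a \<in> V \<Longrightarrow> b \<in> V \<Longrightarrow> a ** t = t ** a \<Longrightarrow> b ** t = t ** b \<Longrightarrow> a ** b = b ** a"
    and rig: "rigid (matgrp C) U V t T"
  shows "torus_datum (matgrp C) U V T"
proof -
  have N: "V \<inter> normalizer (matgrp C) U = {y\<in>V. y \<otimes>\<^bsub>matgrp C\<^esub> t = t \<otimes>\<^bsub>matgrp C\<^esub> y}"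
    using V by (auto simp: normalizer_iff[OF U] normalizes subset_iff)
  have acts': "\<forall>y\<in>V. z \<otimes>\<^bsub>matgrp C\<^esub> y \<otimes>\<^bsub>matgrp C\<^esub> inv\<^bsub>matgrp C\<^esub> z =
      t \<otimes>\<^bsub>matgrp C\<^esub> y \<otimes>\<^bsub>matgrp C\<^esub> inv\<^bsub>matgrp C\<^esub> t"
    using acts z t U V by (simp add: inv_eq_cadj subset_iff)
  have abelian': "\<forall>a\<in>V \<inter> normalizer (matgrp C) U. \<forall>b\<in>V \<inter> normalizer (matgrp C) U.
      a \<otimes>\<^bsub>matgrp C\<^esub> b = b \<otimes>\<^bsub>matgrp C\<^esub> a"
  proof (intro ballI)
    fix a b assume "a \<in> V \<inter> normalizer (matgrp C) U" "b \<in> V \<inter> normalizer (matgrp C) U"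
    then show "a \<otimes>\<^bsub>matgrp C\<^esub> b = b \<otimes>\<^bsub>matgrp C\<^esub> a" using abelian[of a b] by (simp add: N)
  qed
  show ?thesis unfolding torus_datum_def by (intro bexI[of _ z] bexI[of _ t] conjI N acts' abelian' rig z t)
qed

end

interpretation SU: unitary_group "SU_set :: (complex^'n::finite^'n) set"
  by (rule unitary_group.intro[OF group_SU SU_inv])

interpretation Sp2: unitary_group Sp2_set
  by (rule unitary_group.intro[OF group_Sp2 Sp2_inv])

lemma unitary_rows_dichotomy:
  fixes a b c d :: complex
  assumes "a * cnj a + b * cnj b = 1" "c * cnj c + d * cnj d = 1"
    and "a * cnj c + b * cnj d = 0" and "a * cnj c = b * cnj d"
  shows "b = 0 \<and> c = 0 \<or> a = 0 \<and> d = 0"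
proof -
  have ac: "a * cnj c = 0" and bd: "b * cnj d = 0" using assms(3,4) by auto
  show ?thesis
  proof (cases "c = 0")
    case True
    then have "d \<noteq> 0" using assms(2) by auto
    then show ?thesis using bd True by simp
  next
    case False
    then have "a = 0" using ac by simp
    then have "b \<noteq> 0" using assms(1) by auto
    then show ?thesis using bd \<open>a = 0\<close> by simp
  qed
qed

lemma unit_mult_conj_cancel:
  fixes a c :: complex
  assumes "a * cnj a = 1"
  shows "a * c * cnj a = c" "cnj a * c * a = c"
proof -
  have "a * c * cnj a = c * (a * cnj a)" "cnj a * c * a = c * (a * cnj a)" by (simp_all only: ac_simps)
  then show "a * c * cnj a = c" "cnj a * c * a = c" using assms by simp_all
qed

lemma eq_minus_ii_mult_imp_zero:
  fixes e y :: complex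
  assumes "e * e = 1" and "e * y = - \<i> * y"
  shows "y = 0"
proof -
  have "(e + \<i>) * y = 0" using assms(2) by (simp add: distrib_right)
  moreover have "e + \<i> \<noteq> 0"
  proof
    assume "e + \<i> = 0"
    then have "e = - \<i>" by (simp only: eq_neg_iff_add_eq_0)
    then show False using assms(1) by simp
  qed
  ultimately show ?thesis by simp
qed

definition zeta8 :: complex where "zeta8 = cis (pi / 4)"

lemma zeta8_simps [simp]:
  "zeta8 * cnj zeta8 = 1" "cnj zeta8 * zeta8 = 1" "zeta8 * zeta8 = \<i>" "cnj zeta8 * cnj zeta8 = - \<i>"
proof -
  show 1: "zeta8 * cnj zeta8 = 1" "cnj zeta8 * zeta8 = 1" by (simp_all add: zeta8_def cis_cnj cis_mult)
  show 2: "zeta8 * zeta8 = \<i>" by (simp add: zeta8_def cis_mult)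
  have "cnj zeta8 * cnj zeta8 = cnj (zeta8 * zeta8)" by simp
  then show "cnj zeta8 * cnj zeta8 = - \<i>" using 2 by simp
qed

section \<open>The special unitary group SU(3)\<close>

definition mk3 :: "complex \<Rightarrow> complex \<Rightarrow> complex \<Rightarrow> complex \<Rightarrow> complex \<Rightarrow> complex \<Rightarrow> complex \<Rightarrow> complex \<Rightarrow> complex
    \<Rightarrow> complex^3^3" where
  "mk3 a11 a12 a13 a21 a22 a23 a31 a32 a33 = (\<chi> i j.
     if i = 1 then (if j = 1 then a11 else if j = 2 then a12 else a13)
     else if i = 2 then (if j = 1 then a21 else if j = 2 then a22 else a23)
     else (if j = 1 then a31 else if j = 2 then a32 else a33))"

lemma mk3_nth [simp]:
  "mk3 a11 a12 a13 a21 a22 a23 a31 a32 a33 $ 1 $ 1 = a11"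
  "mk3 a11 a12 a13 a21 a22 a23 a31 a32 a33 $ 1 $ 2 = a12"
  "mk3 a11 a12 a13 a21 a22 a23 a31 a32 a33 $ 1 $ 3 = a13"
  "mk3 a11 a12 a13 a21 a22 a23 a31 a32 a33 $ 2 $ 1 = a21"
  "mk3 a11 a12 a13 a21 a22 a23 a31 a32 a33 $ 2 $ 2 = a22"
  "mk3 a11 a12 a13 a21 a22 a23 a31 a32 a33 $ 2 $ 3 = a23"
  "mk3 a11 a12 a13 a21 a22 a23 a31 a32 a33 $ 3 $ 1 = a31"
  "mk3 a11 a12 a13 a21 a22 a23 a31 a32 a33 $ 3 $ 2 = a32"
  "mk3 a11 a12 a13 a21 a22 a23 a31 a32 a33 $ 3 $ 3 = a33"
  by (simp_all add: mk3_def)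

abbreviation dg3 :: "complex \<Rightarrow> complex \<Rightarrow> complex \<Rightarrow> complex^3^3" where
  "dg3 a b c \<equiv> mk3 a 0 0 0 b 0 0 0 c"

lemma mat3_mult_nth: "((A::complex^3^3) ** B) $ i $ j = A$i$1 * B$1$j + A$i$2 * B$2$j + A$i$3 * B$3$j"
  by (simp add: matrix_matrix_mult_def sum_3)

lemma mat3_eq_iff: "(A::complex^3^3) = B \<longleftrightarrow> A$1$1 = B$1$1 \<and> A$1$2 = B$1$2 \<and> A$1$3 = B$1$3 \<and>
   A$2$1 = B$2$1 \<and> A$2$2 = B$2$2 \<and> A$2$3 = B$2$3 \<and> A$3$1 = B$3$1 \<and> A$3$2 = B$3$2 \<and> A$3$3 = B$3$3"
  by (simp add: vec_eq_iff forall_3)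

lemma mk3_SU_iff:
  "mk3 a11 a12 a13 a21 a22 a23 a31 a32 a33 \<in> SU_set \<longleftrightarrow>
     mk3 a11 a12 a13 a21 a22 a23 a31 a32 a33 ** cadj (mk3 a11 a12 a13 a21 a22 a23 a31 a32 a33) = mat 1 \<and>
     det (mk3 a11 a12 a13 a21 a22 a23 a31 a32 a33) = 1"
  by (simp add: SU_set_def)

lemma dg3_SU: "a * cnj a = 1 \<Longrightarrow> b * cnj b = 1 \<Longrightarrow> c * cnj c = 1 \<Longrightarrow> a * b * c = 1 \<Longrightarrow> dg3 a b c \<in> SU_set"
  by (simp add: mk3_SU_iff mat3_eq_iff mat3_mult_nth mat_one_nth det_3)

lemma SU3_G2_mult: "A \<in> SU3_G2 \<Longrightarrow> B \<in> SU3_G2 \<Longrightarrow> A ** B \<in> SU3_G2"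
  by (simp add: SU3_G2_def SU_mult_closed mat3_mult_nth)

lemma SU3_G2_cadj: "A \<in> SU3_G2 \<Longrightarrow> cadj A \<in> SU3_G2"
  by (simp add: SU3_G2_def SU_cadj_closed)

lemma SU3_G1_subgroup: "subgroup SU3_G1 SU3"
  by (rule SU.subgroup_matgrpI)
    (auto simp: SU3_G1_def SU_mult_closed SU_cadj_closed SU_one mat3_mult_nth mat_one_nth)

lemma SU3_G2_subgroup: "subgroup SU3_G2 SU3"
  by (rule SU.subgroup_matgrpI) (auto simp: SU3_G2_mult SU3_G2_cadj, simp_all add: SU3_G2_def SU_one mat_one_nth)

lemma SU3_G1_SU: "SU3_G1 \<subseteq> SU_set" and SU3_G2_SU: "SU3_G2 \<subseteq> SU_set"
  by (auto simp: SU3_G1_def SU3_G2_def)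

lemma SU_diag3_conj_mem:
  assumes y: "y \<in> SU_set" "y$1$2 = 0" "y$1$3 = 0" "y$2$1 = 0" "y$2$3 = 0" "y$3$1 = 0" "y$3$2 = 0"
  shows "x \<in> SU3_G1 \<Longrightarrow> y ** x ** cadj y \<in> SU3_G1" "x \<in> SU3_G2 \<Longrightarrow> y ** x ** cadj y \<in> SU3_G2"
proof -
  have "(y ** cadj y) $ 1 $ 1 = 1" "(y ** cadj y) $ 3 $ 3 = 1"
    using SU_mult_cadj[OF y(1)] by (simp_all add: mat_one_nth)
  then have "y$1$1 * cnj (y$1$1) = 1" "y$3$3 * cnj (y$3$3) = 1"
    using y by (simp_all add: mat3_mult_nth)
  then show "x \<in> SU3_G1 \<Longrightarrow> y ** x ** cadj y \<in> SU3_G1" "x \<in> SU3_G2 \<Longrightarrow> y ** x ** cadj y \<in> SU3_G2"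
    using y by (simp_all add: SU3_G1_def SU3_G2_def mat3_mult_nth SU_mult_closed SU_cadj_closed)
qed

definition t3 :: "complex^3^3" where "t3 = dg3 1 \<i> (-\<i>)"
definition z3 :: "complex^3^3" where "z3 = dg3 (-1) (-1) 1"
definition x3 :: "complex^3^3" where "x3 = dg3 \<i> (-\<i>) 1"
definition weyl3_1 :: "complex^3^3" where "weyl3_1 = mk3 0 1 0 (-1) 0 0 0 0 1"
definition weyl3_2 :: "complex^3^3" where "weyl3_2 = mk3 1 0 0 0 0 1 0 (-1) 0"

lemma t3_G2: "t3 \<in> SU3_G2" and z3_G1: "z3 \<in> SU3_G1" and x3_G1: "x3 \<in> SU3_G1"
  by (simp_all add: t3_def z3_def x3_def SU3_G1_def SU3_G2_def dg3_SU)

lemma weyl3_1_G1: "weyl3_1 \<in> SU3_G1" and weyl3_2_G2: "weyl3_2 \<in> SU3_G2"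
  by (simp_all add: weyl3_1_def weyl3_2_def SU3_G1_def SU3_G2_def mk3_SU_iff mat3_eq_iff mat3_mult_nth
      mat_one_nth det_3)

lemma SU3_G2_commute_t3_iff: "y \<in> SU3_G2 \<Longrightarrow> y ** t3 = t3 ** y \<longleftrightarrow> y$2$3 = 0 \<and> y$3$2 = 0"
  by (auto simp: t3_def SU3_G2_def mat3_eq_iff mat3_mult_nth)

lemma SU3_G2_normalizes_G1_iff:
  assumes y: "y \<in> SU3_G2"
  shows "(\<lambda>x. y ** x ** cadj y) ` SU3_G1 = SU3_G1 \<longleftrightarrow> y$2$3 = 0 \<and> y$3$2 = 0"
proof
  assume im: "(\<lambda>x. y ** x ** cadj y) ` SU3_G1 = SU3_G1"
  have "y \<in> SU_set" using y by (simp add: SU3_G2_def)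
  note mem = SU.conj_image_eqD[OF im this weyl3_1_G1]
  show "y$2$3 = 0 \<and> y$3$2 = 0"
    using mem y by (simp add: weyl3_1_def SU3_G1_def SU3_G2_def mat3_mult_nth)
next
  assume "y$2$3 = 0 \<and> y$3$2 = 0"
  then show "(\<lambda>x. y ** x ** cadj y) ` SU3_G1 = SU3_G1"
    using y by (intro SU.conj_image_eqI SU_diag3_conj_mem(1)) (simp_all add: SU3_G2_def SU_cadj_closed)
qed

lemma SU3_G2_centralizer_t3_commute:
  "a \<in> SU3_G2 \<Longrightarrow> b \<in> SU3_G2 \<Longrightarrow> a ** t3 = t3 ** a \<Longrightarrow> b ** t3 = t3 ** b \<Longrightarrow> a ** b = b ** a"
  by (simp add: SU3_G2_commute_t3_iff) (simp add: SU3_G2_def mat3_eq_iff mat3_mult_nth mult.commute)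

lemma SU3_G2_central:
  assumes e: "e \<in> SU3_G2" "\<forall>y\<in>SU3_G2. e ** y = y ** e"
  shows "e$2$3 = 0" "e$3$2 = 0" "e$3$3 = e$2$2" "e$2$2 * e$2$2 = 1"
proof -
  have e0: "e$1$1 = 1" "e$1$2 = 0" "e$1$3 = 0" "e$2$1 = 0" "e$3$1 = 0" "det e = 1"
    using e(1) by (simp_all add: SU3_G2_def SU_set_def)
  show e23: "e$2$3 = 0" and e32: "e$3$2 = 0" using e t3_G2 SU3_G2_commute_t3_iff by auto
  have "(e ** weyl3_2) $ 2 $ 3 = (weyl3_2 ** e) $ 2 $ 3" using e weyl3_2_G2 by simp
  then show e33: "e$3$3 = e$2$2" using e0 e23 e32 by (simp add: weyl3_2_def mat3_mult_nth)
  show "e$2$2 * e$2$2 = 1" using e0 e23 e32 e33 by (simp add: det_3)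
qed

lemma SU3_G2_conj_t3_dichotomy:
  assumes s: "s \<in> SU3_G2" and off: "(s ** t3 ** cadj s) $ 2 $ 3 = 0"
  shows "s ** t3 = t3 ** s \<or> s ** dg3 1 zeta8 (cnj zeta8) ** cadj s = dg3 1 (cnj zeta8) zeta8"
proof -
  have row: "(s ** cadj s) $ i $ j = (if i = j then 1 else 0)" for i j
    using SU_mult_cadj[of s] s by (simp add: SU3_G2_def mat_one_nth)
  have s0: "s$1$1 = 1" "s$1$2 = 0" "s$1$3 = 0" "s$2$1 = 0" "s$3$1 = 0" using s by (simp_all add: SU3_G2_def)
  have r22: "s$2$2 * cnj (s$2$2) + s$2$3 * cnj (s$2$3) = 1"
    and r33: "s$3$2 * cnj (s$3$2) + s$3$3 * cnj (s$3$3) = 1"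
    and r23: "s$2$2 * cnj (s$3$2) + s$2$3 * cnj (s$3$3) = 0"
    using row[of 2 2] row[of 3 3] row[of 2 3] s0 by (simp_all add: mat3_mult_nth)
  have "\<i> * (s$2$2 * cnj (s$3$2) - s$2$3 * cnj (s$3$3)) = 0"
    using off s0 by (simp add: t3_def mat3_mult_nth algebra_simps)
  then have "s$2$2 * cnj (s$3$2) = s$2$3 * cnj (s$3$3)" by simp
  from unitary_rows_dichotomy[OF r22 r33 r23 this] show ?thesis
  proof
    assume "s$2$3 = 0 \<and> s$3$2 = 0"
    then show ?thesis using s SU3_G2_commute_t3_iff by blast
  next
    assume s23: "s$2$2 = 0 \<and> s$3$3 = 0"
    then have "s$2$3 * cnj (s$2$3) = 1" "s$3$2 * cnj (s$3$2) = 1" using r22 r33 by simp_all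
    then have "s$2$3 * cnj zeta8 * cnj (s$2$3) = cnj zeta8" "s$3$2 * zeta8 * cnj (s$3$2) = zeta8"
      by (simp_all add: unit_mult_conj_cancel)
    then show ?thesis using s0 s23 by (simp add: mat3_eq_iff mat3_mult_nth)
  qed
qed

lemma rigid_SU3: "rigid SU3 SU3_G1 SU3_G2 t3 T"
proof (rule SU.rigid_matgrpI[OF SU3_G1_subgroup SU3_G2_subgroup t3_G2 x3_G1])
  show "x3 ** t3 = t3 ** x3" by (simp add: x3_def t3_def mat3_eq_iff mat3_mult_nth)
  show "x3 ** y ** cadj x3 \<in> SU3_G2" if "y \<in> SU3_G2" for y
    using x3_G1 that by (intro SU_diag3_conj_mem) (simp_all add: x3_def SU3_G1_def)
  fix s e
  assume s: "s \<in> SU3_G2" and e: "e \<in> SU3_G2" "\<forall>y\<in>SU3_G2. e ** y = y ** e"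
    and ey: "e ** (s ** t3 ** cadj s) = x3 ** (s ** t3 ** cadj s) ** cadj x3"
  note ec = SU3_G2_central[OF e]
  have "s ** t3 ** cadj s \<in> SU3_G2" using s t3_G2 by (simp add: SU3_G2_mult SU3_G2_cadj)
  then have "e$2$2 * (s ** t3 ** cadj s)$2$3 = - \<i> * (s ** t3 ** cadj s)$2$3"
    using arg_cong[OF ey, of "\<lambda>A. A$2$3"] e(1) ec by (simp add: x3_def SU3_G2_def mat3_mult_nth)
  then show "s ** t3 = t3 ** s \<or> s ** dg3 1 zeta8 (cnj zeta8) ** cadj s = dg3 1 (cnj zeta8) zeta8"
    using SU3_G2_conj_t3_dichotomy[OF s] eq_minus_ii_mult_imp_zero ec(4) by blast
next
  show "weyl3_1 \<in> SU3_G1" by (rule weyl3_1_G1)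
  show "dg3 zeta8 (cnj zeta8) 1 \<in> SU3_G1" "dg3 (cnj zeta8) zeta8 1 \<in> SU3_G1"
    "dg3 1 zeta8 (cnj zeta8) \<in> SU3_G2" "dg3 1 (cnj zeta8) zeta8 \<in> SU3_G2"
    by (simp_all add: SU3_G1_def SU3_G2_def dg3_SU mult.commute)
  show "weyl3_1 ** dg3 1 zeta8 (cnj zeta8) ** cadj weyl3_1 = dg3 zeta8 (cnj zeta8) 1 ** dg3 1 zeta8 (cnj zeta8)"
    "weyl3_1 ** dg3 1 (cnj zeta8) zeta8 ** cadj weyl3_1 = dg3 (cnj zeta8) zeta8 1 ** dg3 1 (cnj zeta8) zeta8"
    "dg3 zeta8 (cnj zeta8) 1 ** cadj (dg3 (cnj zeta8) zeta8 1) ** weyl3_1 \<noteq>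
       weyl3_1 ** (dg3 zeta8 (cnj zeta8) 1 ** cadj (dg3 (cnj zeta8) zeta8 1))"
    by (simp_all add: weyl3_1_def mat3_eq_iff mat3_mult_nth complex_eq_iff)
qed

lemma torus_datum_SU3: "torus_datum SU3 SU3_G1 SU3_G2 T"
proof (rule SU.torus_datum_matgrpI[OF SU3_G1_SU SU3_G2_SU z3_G1 t3_G2 _ _ _ rigid_SU3])
  show "z3 ** y ** cadj z3 = t3 ** y ** cadj t3" if "y \<in> SU3_G2" for y
    using that by (simp add: z3_def t3_def SU3_G2_def mat3_eq_iff mat3_mult_nth algebra_simps)
  show "(\<lambda>x. y ** x ** cadj y) ` SU3_G1 = SU3_G1 \<longleftrightarrow> y ** t3 = t3 ** y" if "y \<in> SU3_G2" for y
    using that by (simp add: SU3_G2_normalizes_G1_iff SU3_G2_commute_t3_iff)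
qed (rule SU3_G2_centralizer_t3_commute)

section \<open>The compact symplectic group U(2, H)\<close>

definition mk4 :: "complex \<Rightarrow> complex \<Rightarrow> complex \<Rightarrow> complex \<Rightarrow> complex \<Rightarrow> complex \<Rightarrow> complex \<Rightarrow> complex \<Rightarrow>
    complex \<Rightarrow> complex \<Rightarrow> complex \<Rightarrow> complex \<Rightarrow> complex \<Rightarrow> complex \<Rightarrow> complex \<Rightarrow> complex \<Rightarrow> complex^4^4" where
  "mk4 a11 a12 a13 a14 a21 a22 a23 a24 a31 a32 a33 a34 a41 a42 a43 a44 = (\<chi> i j.
     if i = 1 then (if j = 1 then a11 else if j = 2 then a12 else if j = 3 then a13 else a14)
     else if i = 2 then (if j = 1 then a21 else if j = 2 then a22 else if j = 3 then a23 else a24)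
     else if i = 3 then (if j = 1 then a31 else if j = 2 then a32 else if j = 3 then a33 else a34)
     else (if j = 1 then a41 else if j = 2 then a42 else if j = 3 then a43 else a44))"

lemma mk4_nth [simp]:
  "mk4 a11 a12 a13 a14 a21 a22 a23 a24 a31 a32 a33 a34 a41 a42 a43 a44 $ 1 $ 1 = a11"
  "mk4 a11 a12 a13 a14 a21 a22 a23 a24 a31 a32 a33 a34 a41 a42 a43 a44 $ 1 $ 2 = a12"
  "mk4 a11 a12 a13 a14 a21 a22 a23 a24 a31 a32 a33 a34 a41 a42 a43 a44 $ 1 $ 3 = a13"
  "mk4 a11 a12 a13 a14 a21 a22 a23 a24 a31 a32 a33 a34 a41 a42 a43 a44 $ 1 $ 4 = a14"
  "mk4 a11 a12 a13 a14 a21 a22 a23 a24 a31 a32 a33 a34 a41 a42 a43 a44 $ 2 $ 1 = a21"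
  "mk4 a11 a12 a13 a14 a21 a22 a23 a24 a31 a32 a33 a34 a41 a42 a43 a44 $ 2 $ 2 = a22"
  "mk4 a11 a12 a13 a14 a21 a22 a23 a24 a31 a32 a33 a34 a41 a42 a43 a44 $ 2 $ 3 = a23"
  "mk4 a11 a12 a13 a14 a21 a22 a23 a24 a31 a32 a33 a34 a41 a42 a43 a44 $ 2 $ 4 = a24"
  "mk4 a11 a12 a13 a14 a21 a22 a23 a24 a31 a32 a33 a34 a41 a42 a43 a44 $ 3 $ 1 = a31"
  "mk4 a11 a12 a13 a14 a21 a22 a23 a24 a31 a32 a33 a34 a41 a42 a43 a44 $ 3 $ 2 = a32"
  "mk4 a11 a12 a13 a14 a21 a22 a23 a24 a31 a32 a33 a34 a41 a42 a43 a44 $ 3 $ 3 = a33"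
  "mk4 a11 a12 a13 a14 a21 a22 a23 a24 a31 a32 a33 a34 a41 a42 a43 a44 $ 3 $ 4 = a34"
  "mk4 a11 a12 a13 a14 a21 a22 a23 a24 a31 a32 a33 a34 a41 a42 a43 a44 $ 4 $ 1 = a41"
  "mk4 a11 a12 a13 a14 a21 a22 a23 a24 a31 a32 a33 a34 a41 a42 a43 a44 $ 4 $ 2 = a42"
  "mk4 a11 a12 a13 a14 a21 a22 a23 a24 a31 a32 a33 a34 a41 a42 a43 a44 $ 4 $ 3 = a43"
  "mk4 a11 a12 a13 a14 a21 a22 a23 a24 a31 a32 a33 a34 a41 a42 a43 a44 $ 4 $ 4 = a44"
  by (simp_all add: mk4_def)

abbreviation dg4 :: "complex \<Rightarrow> complex \<Rightarrow> complex \<Rightarrow> complex \<Rightarrow> complex^4^4" where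
  "dg4 a b c d \<equiv> mk4 a 0 0 0 0 b 0 0 0 0 c 0 0 0 0 d"

lemma mat4_mult_nth:
  "((A::complex^4^4) ** B) $ i $ j = A$i$1 * B$1$j + A$i$2 * B$2$j + A$i$3 * B$3$j + A$i$4 * B$4$j"
  by (simp add: matrix_matrix_mult_def sum_4)

lemma mat4_eq_iff: "(A::complex^4^4) = B \<longleftrightarrow>
   A$1$1 = B$1$1 \<and> A$1$2 = B$1$2 \<and> A$1$3 = B$1$3 \<and> A$1$4 = B$1$4 \<and>
   A$2$1 = B$2$1 \<and> A$2$2 = B$2$2 \<and> A$2$3 = B$2$3 \<and> A$2$4 = B$2$4 \<and>
   A$3$1 = B$3$1 \<and> A$3$2 = B$3$2 \<and> A$3$3 = B$3$3 \<and> A$3$4 = B$3$4 \<and>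
   A$4$1 = B$4$1 \<and> A$4$2 = B$4$2 \<and> A$4$3 = B$4$3 \<and> A$4$4 = B$4$4"
  by (simp add: vec_eq_iff forall_4)

lemma transpose_nth [simp]: "transpose A $ i $ j = A $ j $ i"
  by (simp add: transpose_def)

lemma symplectic_form_nth:
  "(transpose (A::complex^4^4) ** J4 ** A) $ i $ j = A$1$i * A$3$j + A$2$i * A$4$j - A$3$i * A$1$j - A$4$i * A$2$j"
  by (simp add: mat4_mult_nth J4_def transpose_def algebra_simps)

lemma J4_nth [simp]:
  "J4$1$1 = 0" "J4$1$2 = 0" "J4$1$3 = 1" "J4$1$4 = 0" "J4$2$1 = 0" "J4$2$2 = 0" "J4$2$3 = 0" "J4$2$4 = 1"
  "J4$3$1 = -1" "J4$3$2 = 0" "J4$3$3 = 0" "J4$3$4 = 0" "J4$4$1 = 0" "J4$4$2 = -1" "J4$4$3 = 0" "J4$4$4 = 0"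
  by (simp_all add: J4_def)

lemma Sp2_set_iff: "A \<in> Sp2_set \<longleftrightarrow> A ** cadj A = mat 1 \<and> transpose A ** J4 ** A = J4"
  by (simp add: Sp2_set_def)

lemma dg4_Sp2: "a * cnj a = 1 \<Longrightarrow> b * cnj b = 1 \<Longrightarrow> c * cnj c = 1 \<Longrightarrow> d * cnj d = 1 \<Longrightarrow>
    a * c = 1 \<Longrightarrow> b * d = 1 \<Longrightarrow> dg4 a b c d \<in> Sp2_set"
  by (simp add: Sp2_set_iff mat4_eq_iff mat4_mult_nth mat_one_nth symplectic_form_nth mult.commute)

lemma Sp2_long_iff: "A \<in> Sp2_long \<longleftrightarrow> A \<in> Sp2_set \<and> A$1$1 = 1 \<and> A$1$2 = 0 \<and> A$1$3 = 0 \<and> A$1$4 = 0 \<and>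
   A$2$1 = 0 \<and> A$2$3 = 0 \<and> A$3$1 = 0 \<and> A$3$2 = 0 \<and> A$3$3 = 1 \<and> A$3$4 = 0 \<and> A$4$1 = 0 \<and> A$4$3 = 0"
  unfolding Sp2_long_def by (auto simp: forall_4)

lemma Sp2_long_subgroup: "subgroup Sp2_long Sp2"
  by (rule Sp2.subgroup_matgrpI)
    (auto simp: Sp2_long_iff Sp2_mult_closed Sp2_cadj_closed Sp2_one mat4_mult_nth mat_one_nth)

definition mk2 :: "complex \<Rightarrow> complex \<Rightarrow> complex \<Rightarrow> complex \<Rightarrow> complex^2^2" where
  "mk2 a b c d = (\<chi> i j. if i = 1 then (if j = 1 then a else b) else (if j = 1 then c else d))"

lemma mk2_nth [simp]: "mk2 a b c d $ 1 $ 1 = a" "mk2 a b c d $ 1 $ 2 = b" "mk2 a b c d $ 2 $ 1 = c"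
  "mk2 a b c d $ 2 $ 2 = d"
  by (simp_all add: mk2_def)

abbreviation dg2 :: "complex \<Rightarrow> complex \<Rightarrow> complex^2^2" where
  "dg2 a b \<equiv> mk2 a 0 0 b"

lemma mat2_mult_nth: "((A::complex^2^2) ** B) $ i $ j = A$i$1 * B$1$j + A$i$2 * B$2$j"
  by (simp add: matrix_matrix_mult_def sum_2)

lemma mat2_eq_iff: "(A::complex^2^2) = B \<longleftrightarrow> A$1$1 = B$1$1 \<and> A$1$2 = B$1$2 \<and> A$2$1 = B$2$1 \<and> A$2$2 = B$2$2"
  by (simp add: vec_eq_iff forall_2)

lemma mk2_SU_iff: "mk2 a b c d \<in> SU_set \<longleftrightarrow> mk2 a b c d ** cadj (mk2 a b c d) = mat 1 \<and> det (mk2 a b c d) = 1"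
  by (simp add: SU_set_def)

lemma dg2_SU: "a * cnj a = 1 \<Longrightarrow> a * b = 1 \<Longrightarrow> b * cnj b = 1 \<Longrightarrow> dg2 a b \<in> SU_set"
  by (simp add: mk2_SU_iff mat2_eq_iff mat2_mult_nth mat_one_nth det_2)

lemma SU2_unitary_entries:
  fixes U :: "complex^2^2"
  assumes U: "U \<in> SU_set"
  shows "U$1$1 * cnj (U$1$1) + U$1$2 * cnj (U$1$2) = 1" "U$2$1 * cnj (U$2$1) + U$2$2 * cnj (U$2$2) = 1"
    "U$1$1 * cnj (U$2$1) + U$1$2 * cnj (U$2$2) = 0"
    "cnj (U$1$1) * U$1$1 + cnj (U$2$1) * U$2$1 = 1" "cnj (U$1$2) * U$1$2 + cnj (U$2$2) * U$2$2 = 1"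
    "cnj (U$1$1) * U$1$2 + cnj (U$2$1) * U$2$2 = 0"
proof -
  have r: "(U ** cadj U) $ i $ j = (if i = j then 1 else 0)" for i j
    using SU_mult_cadj[OF U] by (simp add: mat_one_nth)
  have c: "(cadj U ** U) $ i $ j = (if i = j then 1 else 0)" for i j
    using SU_cadj_mult[OF U] by (simp add: mat_one_nth)
  show "U$1$1 * cnj (U$1$1) + U$1$2 * cnj (U$1$2) = 1" using r[of 1 1] by (simp add: mat2_mult_nth)
  show "U$2$1 * cnj (U$2$1) + U$2$2 * cnj (U$2$2) = 1" using r[of 2 2] by (simp add: mat2_mult_nth)
  show "U$1$1 * cnj (U$2$1) + U$1$2 * cnj (U$2$2) = 0" using r[of 1 2] by (simp add: mat2_mult_nth)
  show "cnj (U$1$1) * U$1$1 + cnj (U$2$1) * U$2$1 = 1" using c[of 1 1] by (simp add: mat2_mult_nth)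
  show "cnj (U$1$2) * U$1$2 + cnj (U$2$2) * U$2$2 = 1" using c[of 2 2] by (simp add: mat2_mult_nth)
  show "cnj (U$1$1) * U$1$2 + cnj (U$2$1) * U$2$2 = 0" using c[of 1 2] by (simp add: mat2_mult_nth)
qed

definition diag_conj :: "complex^2^2 \<Rightarrow> complex^4^4" where
  "diag_conj U = mk4 (U$1$1) (U$1$2) 0 0 (U$2$1) (U$2$2) 0 0
               0 0 (cnj (U$1$1)) (cnj (U$1$2)) 0 0 (cnj (U$2$1)) (cnj (U$2$2))"

lemma Sp2_short_eq: "Sp2_short = diag_conj ` SU_set"
  unfolding Sp2_short_def by (intro image_cong refl) (simp add: mat4_eq_iff diag_conj_def Let_def)

lemma diag_conj_nth [simp]:
  "diag_conj U $ 1 $ 1 = U$1$1" "diag_conj U $ 1 $ 2 = U$1$2" "diag_conj U $ 1 $ 3 = 0" "diag_conj U $ 1 $ 4 = 0"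
  "diag_conj U $ 2 $ 1 = U$2$1" "diag_conj U $ 2 $ 2 = U$2$2" "diag_conj U $ 2 $ 3 = 0" "diag_conj U $ 2 $ 4 = 0"
  "diag_conj U $ 3 $ 1 = 0" "diag_conj U $ 3 $ 2 = 0" "diag_conj U $ 3 $ 3 = cnj (U$1$1)" "diag_conj U $ 3 $ 4 = cnj (U$1$2)"
  "diag_conj U $ 4 $ 1 = 0" "diag_conj U $ 4 $ 2 = 0" "diag_conj U $ 4 $ 3 = cnj (U$2$1)" "diag_conj U $ 4 $ 4 = cnj (U$2$2)"
  by (simp_all add: diag_conj_def)

lemma diag_conj_mult: "diag_conj (U ** V) = diag_conj U ** diag_conj V"
  by (simp add: mat4_eq_iff mat4_mult_nth mat2_mult_nth)

lemma diag_conj_cadj: "cadj (diag_conj U) = diag_conj (cadj U)"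
  by (simp add: mat4_eq_iff)

lemma diag_conj_Sp2:
  assumes U: "U \<in> SU_set"
  shows "diag_conj U \<in> Sp2_set"
proof -
  note f = SU2_unitary_entries[OF U]
  have "diag_conj U ** cadj (diag_conj U) = diag_conj (U ** cadj U)" by (simp add: diag_conj_cadj diag_conj_mult)
  also have "\<dots> = mat 1" using U by (simp add: SU_mult_cadj mat4_eq_iff mat_one_nth)
  finally have unitary: "diag_conj U ** cadj (diag_conj U) = mat 1" .
  have g1: "cnj (U$1$1) * U$1$1 = 1 - cnj (U$2$1) * U$2$1" using f(4) by (simp add: eq_diff_eq)
  have g4: "cnj (U$1$2) * U$1$2 = 1 - cnj (U$2$2) * U$2$2" using f(5) by (simp add: eq_diff_eq)
  have g2: "cnj (U$1$1) * U$1$2 = - (cnj (U$2$1) * U$2$2)" using f(6) by (simp add: eq_neg_iff_add_eq_0)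
  have "cnj (cnj (U$1$1) * U$1$2 + cnj (U$2$1) * U$2$2) = 0" using f(6) by simp
  then have "cnj (U$1$2) * U$1$1 + cnj (U$2$2) * U$2$1 = 0" by (simp add: mult.commute)
  then have g3: "cnj (U$1$2) * U$1$1 = - (cnj (U$2$2) * U$2$1)" by (simp add: eq_neg_iff_add_eq_0)
  have f1: "U$1$1 * cnj (U$1$1) + U$2$1 * cnj (U$2$1) = 1" using f(4) by (simp add: mult.commute)
  have f2: "U$1$2 * cnj (U$1$2) + U$2$2 * cnj (U$2$2) = 1" using f(5) by (simp add: mult.commute)
  have f3: "U$1$1 * cnj (U$1$2) + U$2$1 * cnj (U$2$2) = 0"
    using arg_cong[OF f(6), of cnj] by (simp add: mult.commute)
  have f4: "U$1$2 * cnj (U$1$1) + U$2$2 * cnj (U$2$1) = 0" using f(6) by (simp add: mult.commute)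
  have "transpose (diag_conj U) ** J4 ** diag_conj U = J4"
    unfolding mat4_eq_iff symplectic_form_nth by (simp add: g1 g2 g3 g4 f1 f2 f3 f4)
  with unitary show ?thesis by (simp add: Sp2_set_iff)
qed

lemma Sp2_short_iff: "A \<in> Sp2_short \<longleftrightarrow> (\<exists>U\<in>SU_set. A = diag_conj U)"
  by (auto simp: Sp2_short_eq)

lemma Sp2_short_subgroup: "subgroup Sp2_short Sp2"
proof (rule Sp2.subgroup_matgrpI)
  show "Sp2_short \<subseteq> Sp2_set" by (auto simp: Sp2_short_iff diag_conj_Sp2)
  show "mat 1 \<in> Sp2_short"
    unfolding Sp2_short_iff by (rule bexI[of _ "mat 1"]) (simp_all add: SU_one mat4_eq_iff mat_one_nth)
  show "A ** B \<in> Sp2_short" if "A \<in> Sp2_short" "B \<in> Sp2_short" for A B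
    using that by (auto simp: Sp2_short_iff diag_conj_mult[symmetric] SU_mult_closed)
  show "cadj A \<in> Sp2_short" if "A \<in> Sp2_short" for A
    using that by (auto simp: Sp2_short_iff diag_conj_cadj SU_cadj_closed)
qed

lemma Sp2_short_Sp2: "Sp2_short \<subseteq> Sp2_set" and Sp2_long_Sp2: "Sp2_long \<subseteq> Sp2_set"
  by (auto simp: Sp2_short_iff diag_conj_Sp2 Sp2_long_iff)

lemma unit_inverse_eq_cnj:
  fixes a b :: complex
  assumes "a * cnj a = 1" and "a * b = 1"
  shows "b = cnj a"
proof -
  have "b = b * (a * cnj a)" using assms(1) by simp
  also have "\<dots> = (a * b) * cnj a" by (simp only: ac_simps)
  finally show ?thesis using assms(2) by simp
qed

lemma Sp2_diag_nth:
  assumes y: "y \<in> Sp2_set" "y$1$2 = 0" "y$1$3 = 0" "y$1$4 = 0" "y$2$1 = 0" "y$2$3 = 0" "y$2$4 = 0"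
    "y$3$1 = 0" "y$3$2 = 0" "y$3$4 = 0" "y$4$1 = 0" "y$4$2 = 0" "y$4$3 = 0"
  shows "y$1$1 * cnj (y$1$1) = 1" "y$2$2 * cnj (y$2$2) = 1" "y$3$3 = cnj (y$1$1)" "y$4$4 = cnj (y$2$2)"
proof -
  have r: "(y ** cadj y) $ i $ i = 1" for i using Sp2_mult_cadj[OF y(1)] by (simp add: mat_one_nth)
  have sy: "(transpose y ** J4 ** y) $ i $ j = J4 $ i $ j" for i j using y(1) by (simp add: Sp2_set_iff)
  show a: "y$1$1 * cnj (y$1$1) = 1" and b: "y$2$2 * cnj (y$2$2) = 1"
    using r[of 1] r[of 2] y by (simp_all add: mat4_mult_nth)
  have "y$1$1 * y$3$3 = 1" "y$2$2 * y$4$4 = 1"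
    using sy[of 1 3] sy[of 2 4] y by (simp_all add: symplectic_form_nth)
  then show "y$3$3 = cnj (y$1$1)" "y$4$4 = cnj (y$2$2)"
    using unit_inverse_eq_cnj a b by blast+
qed

lemma Sp2_diag_conj_mem:
  assumes y: "y \<in> Sp2_set" "y$1$2 = 0" "y$1$3 = 0" "y$1$4 = 0" "y$2$1 = 0" "y$2$3 = 0" "y$2$4 = 0"
    "y$3$1 = 0" "y$3$2 = 0" "y$3$4 = 0" "y$4$1 = 0" "y$4$2 = 0" "y$4$3 = 0"
  shows "x \<in> Sp2_long \<Longrightarrow> y ** x ** cadj y \<in> Sp2_long" "x \<in> Sp2_short \<Longrightarrow> y ** x ** cadj y \<in> Sp2_short"
proof -
  note f = Sp2_diag_nth[OF y]
  have "cnj (y$1$1) * y$1$1 = 1" "cnj (y$2$2) * y$2$2 = 1" using f(1,2) by (simp_all add: mult.commute)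
  then show "x \<in> Sp2_long \<Longrightarrow> y ** x ** cadj y \<in> Sp2_long"
    using y f by (simp add: Sp2_long_iff mat4_mult_nth Sp2_mult_closed Sp2_cadj_closed)
  assume "x \<in> Sp2_short"
  then obtain U where U: "U \<in> SU_set" "x = diag_conj U" by (auto simp: Sp2_short_iff)
  define D where "D = dg2 (y$1$1) (y$2$2)"
  have DD: "D ** cadj D = mat 1" "cadj D ** D = mat 1"
    using f by (simp_all add: D_def mat2_eq_iff mat2_mult_nth mat_one_nth mult.commute)
  have "D ** U ** cadj D ** cadj (D ** U ** cadj D) = D ** U ** (cadj D ** D) ** cadj U ** cadj D"
    by (simp add: cadj_matrix_mult matrix_mul_assoc)
  also have "\<dots> = mat 1" using DD U by (simp add: SU_mult_cadj matrix_mul_assoc[symmetric])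
  finally have unitary: "D ** U ** cadj D ** cadj (D ** U ** cadj D) = mat 1" .
  have "det (D ** U ** cadj D) = det D * det U * det (cadj D)" by (simp add: det_mul)
  also have "\<dots> = 1"
  proof -
    have "y$1$1 * y$2$2 * (cnj (y$1$1) * cnj (y$2$2)) = (y$1$1 * cnj (y$1$1)) * (y$2$2 * cnj (y$2$2))"
      by (simp add: algebra_simps)
    then show ?thesis using U f by (simp add: D_def SU_set_def det_2)
  qed
  finally have "D ** U ** cadj D \<in> SU_set" using unitary by (simp add: SU_set_def)
  moreover have "y ** x ** cadj y = diag_conj (D ** U ** cadj D)"
    using y f by (simp add: U(2) D_def mat4_eq_iff mat4_mult_nth mat2_mult_nth)
  ultimately show "y ** x ** cadj y \<in> Sp2_short" by (auto simp: Sp2_short_iff)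
qed

definition t_long :: "complex^4^4" where "t_long = dg4 1 \<i> 1 (-\<i>)"
definition z_long :: "complex^4^4" where "z_long = dg4 1 (-1) 1 (-1)"
definition weyl_long :: "complex^4^4" where "weyl_long = mk4 1 0 0 0 0 0 0 1 0 0 1 0 0 (-1) 0 0"
definition t_short :: "complex^4^4" where "t_short = diag_conj (dg2 \<i> (-\<i>))"
definition weyl_short :: "complex^4^4" where "weyl_short = diag_conj (mk2 0 1 (-1) 0)"

lemma t_long_long: "t_long \<in> Sp2_long" and z_long_long: "z_long \<in> Sp2_long"
  by (simp_all add: t_long_def z_long_def Sp2_long_iff dg4_Sp2)

lemma weyl_long_long: "weyl_long \<in> Sp2_long"
  by (simp add: weyl_long_def Sp2_long_iff Sp2_set_iff mat4_eq_iff mat4_mult_nth mat_one_nth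
      symplectic_form_nth)

lemma t_short_short: "t_short \<in> Sp2_short"
  unfolding t_short_def Sp2_short_iff by (rule bexI[where x = "dg2 \<i> (-\<i>)"]) (simp_all add: dg2_SU)

lemma weyl_short_short: "weyl_short \<in> Sp2_short"
  unfolding weyl_short_def Sp2_short_iff
  by (rule bexI[where x = "mk2 0 1 (-1) 0"]) (simp_all add: mk2_SU_iff mat2_eq_iff mat2_mult_nth mat_one_nth det_2)

lemma diag_conj_dg2_short: "a * cnj a = 1 \<Longrightarrow> diag_conj (dg2 a (cnj a)) \<in> Sp2_short"
  unfolding Sp2_short_iff by (rule bexI[where x = "dg2 a (cnj a)"]) (simp_all add: dg2_SU mult.commute)

lemma Sp2_long_commute_t_long_iff:
  "y \<in> Sp2_long \<Longrightarrow> y ** t_long = t_long ** y \<longleftrightarrow> y$2$4 = 0 \<and> y$4$2 = 0"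
  by (auto simp: t_long_def mat4_eq_iff mat4_mult_nth Sp2_long_iff)

lemma Sp2_short_nth:
  assumes "A \<in> Sp2_short"
  shows "A$1$3 = 0" "A$1$4 = 0" "A$2$3 = 0" "A$2$4 = 0" "A$3$1 = 0" "A$3$2 = 0" "A$4$1 = 0" "A$4$2 = 0"
    "A$3$3 = cnj (A$1$1)" "A$3$4 = cnj (A$1$2)" "A$4$3 = cnj (A$2$1)" "A$4$4 = cnj (A$2$2)"
  using assms by (auto simp: Sp2_short_iff)

lemma neg_eq_self_imp_zero: "- x = (x::complex) \<Longrightarrow> x = 0"
  by (simp add: complex_eq_iff)

lemma Sp2_short_commute_t_short_iff:
  assumes y: "y \<in> Sp2_short"
  shows "y ** t_short = t_short ** y \<longleftrightarrow> y$1$2 = 0 \<and> y$2$1 = 0"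
proof
  note f = Sp2_short_nth[OF y]
  assume c: "y ** t_short = t_short ** y"
  have "(y ** t_short) $ 1 $ 2 = (t_short ** y) $ 1 $ 2" "(y ** t_short) $ 2 $ 1 = (t_short ** y) $ 2 $ 1"
    using c by simp_all
  then have "- (\<i> * y$1$2) = \<i> * y$1$2" "- (\<i> * y$2$1) = \<i> * y$2$1"
    using f by (simp_all add: t_short_def mat4_mult_nth mult.commute)
  then show "y$1$2 = 0 \<and> y$2$1 = 0" using neg_eq_self_imp_zero by fastforce
next
  assume "y$1$2 = 0 \<and> y$2$1 = 0"
  then show "y ** t_short = t_short ** y"
    using Sp2_short_nth[OF y] by (simp add: t_short_def mat4_eq_iff mat4_mult_nth mult.commute)
qed

lemma Sp2_long_normalizes_short_iff:
  assumes y: "y \<in> Sp2_long"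
  shows "(\<lambda>x. y ** x ** cadj y) ` Sp2_short = Sp2_short \<longleftrightarrow> y$2$4 = 0 \<and> y$4$2 = 0"
proof
  assume im: "(\<lambda>x. y ** x ** cadj y) ` Sp2_short = Sp2_short"
  have yS: "y \<in> Sp2_set" using y by (simp add: Sp2_long_iff)
  have "y ** weyl_short ** cadj y \<in> Sp2_short" "cadj y ** weyl_short ** y \<in> Sp2_short"
    using Sp2.conj_image_eqD[OF im yS weyl_short_short] .
  then show "y$2$4 = 0 \<and> y$4$2 = 0"
    using y Sp2_short_nth by (fastforce simp: weyl_short_def Sp2_long_iff mat4_mult_nth)
next
  assume "y$2$4 = 0 \<and> y$4$2 = 0"
  then have diag: "y \<in> Sp2_set" "cadj y \<in> Sp2_set" using y by (simp_all add: Sp2_long_iff Sp2_cadj_closed)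
  show "(\<lambda>x. y ** x ** cadj y) ` Sp2_short = Sp2_short"
    using \<open>y$2$4 = 0 \<and> y$4$2 = 0\<close> y
    by (intro Sp2.conj_image_eqI diag(1) Sp2_diag_conj_mem(2))
      (simp_all add: diag Sp2_long_iff)
qed

lemma Sp2_short_normalizes_long_iff:
  assumes y: "y \<in> Sp2_short"
  shows "(\<lambda>x. y ** x ** cadj y) ` Sp2_long = Sp2_long \<longleftrightarrow> y$1$2 = 0 \<and> y$2$1 = 0"
proof
  assume im: "(\<lambda>x. y ** x ** cadj y) ` Sp2_long = Sp2_long"
  obtain U where U: "U \<in> SU_set" "y = diag_conj U" using y by (auto simp: Sp2_short_iff)
  note r = SU2_unitary_entries[OF U(1)]
  have "y ** weyl_long ** cadj y \<in> Sp2_long"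
    using Sp2.conj_image_eqD(1)[OF im _ weyl_long_long] y Sp2_short_Sp2 by blast
  then have u21: "U$1$1 * cnj (U$2$1) = 0" and u11: "U$1$1 * cnj (U$1$1) = 1"
    by (simp_all add: U(2) weyl_long_def Sp2_long_iff mat4_mult_nth)
  then have "U$1$2 * cnj (U$1$2) = 0" using r(1) by simp
  then have "U$1$2 = 0" by simp
  moreover have "U$2$1 = 0" using u21 u11 by auto
  ultimately show "y$1$2 = 0 \<and> y$2$1 = 0" by (simp add: U(2))
next
  assume off: "y$1$2 = 0 \<and> y$2$1 = 0"
  have diag: "y \<in> Sp2_set" "cadj y \<in> Sp2_set" using y Sp2_short_Sp2 Sp2_cadj_closed by auto
  show "(\<lambda>x. y ** x ** cadj y) ` Sp2_long = Sp2_long"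
    using off y by (intro Sp2.conj_image_eqI diag(1) Sp2_diag_conj_mem(1)) (auto simp: diag Sp2_short_iff)
qed

lemma Sp2_long_centralizer_commute:
  "a \<in> Sp2_long \<Longrightarrow> b \<in> Sp2_long \<Longrightarrow> a ** t_long = t_long ** a \<Longrightarrow> b ** t_long = t_long ** b \<Longrightarrow>
     a ** b = b ** a"
  by (simp add: Sp2_long_commute_t_long_iff) (simp add: Sp2_long_iff mat4_eq_iff mat4_mult_nth mult.commute)

lemma Sp2_short_centralizer_commute:
  "a \<in> Sp2_short \<Longrightarrow> b \<in> Sp2_short \<Longrightarrow> a ** t_short = t_short ** a \<Longrightarrow> b ** t_short = t_short ** b \<Longrightarrow>
     a ** b = b ** a"
  using Sp2_short_nth[of a] Sp2_short_nth[of b]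
  by (simp add: Sp2_short_commute_t_short_iff) (simp add: mat4_eq_iff mat4_mult_nth mult.commute)

lemma Sp2_long_central:
  assumes e: "e \<in> Sp2_long" "\<forall>y\<in>Sp2_long. e ** y = y ** e"
  shows "e$2$4 = 0" "e$4$2 = 0" "e$4$4 = e$2$2" "e$2$2 * e$2$2 = 1"
proof -
  have e0: "e$1$2 = 0" "e$1$4 = 0" "e$2$1 = 0" "e$2$3 = 0" "e$3$2 = 0" "e$3$4 = 0" "e$4$1 = 0" "e$4$3 = 0"
    "transpose e ** J4 ** e = J4"
    using e(1) by (simp_all add: Sp2_long_iff Sp2_set_iff)
  show e24: "e$2$4 = 0" and e42: "e$4$2 = 0" using e t_long_long Sp2_long_commute_t_long_iff by auto
  have "(e ** weyl_long) $ 2 $ 4 = (weyl_long ** e) $ 2 $ 4" using e weyl_long_long by simp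
  then show e44: "e$4$4 = e$2$2" using e0 e24 e42 by (simp add: weyl_long_def mat4_mult_nth)
  have "(transpose e ** J4 ** e) $ 2 $ 4 = J4 $ 2 $ 4" using e0(9) by simp
  then show "e$2$2 * e$2$2 = 1" using e0(1-8) e24 e42 e44 by (simp add: symplectic_form_nth)
qed

lemma Sp2_short_central:
  assumes e: "e \<in> Sp2_short" "\<forall>y\<in>Sp2_short. e ** y = y ** e"
  shows "e$1$2 = 0" "e$2$1 = 0" "e$2$2 = e$1$1" "e$1$1 * e$1$1 = 1"
proof -
  obtain E where E: "E \<in> SU_set" "e = diag_conj E" using e by (auto simp: Sp2_short_iff)
  show e12: "e$1$2 = 0" and e21: "e$2$1 = 0" using e t_short_short Sp2_short_commute_t_short_iff by auto
  have "(e ** weyl_short) $ 1 $ 2 = (weyl_short ** e) $ 1 $ 2" using e weyl_short_short by simp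
  then show e22: "e$2$2 = e$1$1" using e12 e21 by (simp add: E(2) weyl_short_def mat4_mult_nth)
  show "e$1$1 * e$1$1 = 1" using E e12 e21 e22 by (simp add: SU_set_def det_2)
qed

lemma Sp2_long_conj_t_dichotomy:
  assumes s: "s \<in> Sp2_long" and off: "(s ** t_long ** cadj s) $ 2 $ 4 = 0"
  shows "s ** t_long = t_long ** s \<or> s ** dg4 1 zeta8 1 (cnj zeta8) ** cadj s = dg4 1 (cnj zeta8) 1 zeta8"
proof -
  have row: "(s ** cadj s) $ i $ j = (if i = j then 1 else 0)" for i j
    using Sp2_mult_cadj[of s] s by (simp add: Sp2_long_iff mat_one_nth)
  have s0: "s$1$1 = 1" "s$1$2 = 0" "s$1$3 = 0" "s$1$4 = 0" "s$2$1 = 0" "s$2$3 = 0" "s$3$1 = 0" "s$3$2 = 0"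
    "s$3$3 = 1" "s$3$4 = 0" "s$4$1 = 0" "s$4$3 = 0" using s by (simp_all add: Sp2_long_iff)
  have r22: "s$2$2 * cnj (s$2$2) + s$2$4 * cnj (s$2$4) = 1"
    and r44: "s$4$2 * cnj (s$4$2) + s$4$4 * cnj (s$4$4) = 1"
    and r24: "s$2$2 * cnj (s$4$2) + s$2$4 * cnj (s$4$4) = 0"
    using row[of 2 2] row[of 4 4] row[of 2 4] s0 by (simp_all add: mat4_mult_nth)
  have "\<i> * (s$2$2 * cnj (s$4$2) - s$2$4 * cnj (s$4$4)) = 0"
    using off s0 by (simp add: t_long_def mat4_mult_nth algebra_simps)
  then have "s$2$2 * cnj (s$4$2) = s$2$4 * cnj (s$4$4)" by simp
  from unitary_rows_dichotomy[OF r22 r44 r24 this] show ?thesis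
  proof
    assume "s$2$4 = 0 \<and> s$4$2 = 0"
    then show ?thesis using s Sp2_long_commute_t_long_iff by blast
  next
    assume s24: "s$2$2 = 0 \<and> s$4$4 = 0"
    then have "s$2$4 * cnj (s$2$4) = 1" "s$4$2 * cnj (s$4$2) = 1" using r22 r44 by simp_all
    then have "s$2$4 * cnj zeta8 * cnj (s$2$4) = cnj zeta8" "s$4$2 * zeta8 * cnj (s$4$2) = zeta8"
      by (simp_all add: unit_mult_conj_cancel)
    then show ?thesis using s0 s24 by (simp add: mat4_eq_iff mat4_mult_nth)
  qed
qed

lemma rigid_Sp2_long: "rigid Sp2 Sp2_short Sp2_long t_long T"
proof (rule Sp2.rigid_matgrpI[OF Sp2_short_subgroup Sp2_long_subgroup t_long_long
      diag_conj_dg2_short[OF zeta8_simps(1)], where n = weyl_short and u = "diag_conj (dg2 zeta8 (cnj zeta8))"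
      and u' = "diag_conj (dg2 (cnj zeta8) zeta8)"])
  show "diag_conj (dg2 zeta8 (cnj zeta8)) ** t_long = t_long ** diag_conj (dg2 zeta8 (cnj zeta8))"
    by (simp add: t_long_def mat4_eq_iff mat4_mult_nth)
  show "diag_conj (dg2 zeta8 (cnj zeta8)) ** y ** cadj (diag_conj (dg2 zeta8 (cnj zeta8))) \<in> Sp2_long"
    if "y \<in> Sp2_long" for y
    using that diag_conj_dg2_short[OF zeta8_simps(1)] Sp2_short_Sp2 by (intro Sp2_diag_conj_mem) auto
  fix s e
  assume s: "s \<in> Sp2_long" and e: "e \<in> Sp2_long" "\<forall>y\<in>Sp2_long. e ** y = y ** e"
    and ey: "e ** (s ** t_long ** cadj s) =
      diag_conj (dg2 zeta8 (cnj zeta8)) ** (s ** t_long ** cadj s) ** cadj (diag_conj (dg2 zeta8 (cnj zeta8)))"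
  note ec = Sp2_long_central[OF e]
  define y' where "y' = s ** t_long ** cadj s"
  have "e$2$2 * y'$2$4 = cnj zeta8 * y'$2$4 * cnj zeta8"
    using arg_cong[OF ey[folded y'_def], of "\<lambda>A. A$2$4"] e(1) ec by (simp add: Sp2_long_iff mat4_mult_nth)
  also have "\<dots> = - \<i> * y'$2$4"
    by (simp only: ac_simps) (simp flip: mult.assoc)
  finally have "y'$2$4 = 0" using eq_minus_ii_mult_imp_zero ec(4) by blast
  then show "s ** t_long = t_long ** s \<or>
      s ** dg4 1 zeta8 1 (cnj zeta8) ** cadj s = dg4 1 (cnj zeta8) 1 zeta8"
    using Sp2_long_conj_t_dichotomy[OF s] by (simp add: y'_def)
next
  show "weyl_short \<in> Sp2_short" by (rule weyl_short_short)
  show "diag_conj (dg2 zeta8 (cnj zeta8)) \<in> Sp2_short" by (simp add: diag_conj_dg2_short)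
  show "diag_conj (dg2 (cnj zeta8) zeta8) \<in> Sp2_short"
    using diag_conj_dg2_short[of "cnj zeta8"] by simp
  show "dg4 1 zeta8 1 (cnj zeta8) \<in> Sp2_long" "dg4 1 (cnj zeta8) 1 zeta8 \<in> Sp2_long"
    by (simp_all add: Sp2_long_iff dg4_Sp2 mult.commute)
  show "weyl_short ** dg4 1 zeta8 1 (cnj zeta8) ** cadj weyl_short =
      diag_conj (dg2 zeta8 (cnj zeta8)) ** dg4 1 zeta8 1 (cnj zeta8)"
    "weyl_short ** dg4 1 (cnj zeta8) 1 zeta8 ** cadj weyl_short =
      diag_conj (dg2 (cnj zeta8) zeta8) ** dg4 1 (cnj zeta8) 1 zeta8"
    by (simp_all add: weyl_short_def mat4_eq_iff mat4_mult_nth)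
  show "diag_conj (dg2 zeta8 (cnj zeta8)) ** cadj (diag_conj (dg2 (cnj zeta8) zeta8)) ** weyl_short \<noteq>
      weyl_short ** (diag_conj (dg2 zeta8 (cnj zeta8)) ** cadj (diag_conj (dg2 (cnj zeta8) zeta8)))"
    by (simp add: weyl_short_def mat4_eq_iff mat4_mult_nth complex_eq_iff)
qed

lemma torus_datum_Sp2_long: "torus_datum Sp2 Sp2_short Sp2_long T"
proof (rule Sp2.torus_datum_matgrpI[OF Sp2_short_Sp2 Sp2_long_Sp2 t_short_short t_long_long _ _ _
      rigid_Sp2_long])
  show "t_short ** y ** cadj t_short = t_long ** y ** cadj t_long" if "y \<in> Sp2_long" for y
    using that by (simp add: t_short_def t_long_def Sp2_long_iff mat4_eq_iff mat4_mult_nth algebra_simps)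
  show "(\<lambda>x. y ** x ** cadj y) ` Sp2_short = Sp2_short \<longleftrightarrow> y ** t_long = t_long ** y"
    if "y \<in> Sp2_long" for y
    using that by (simp add: Sp2_long_normalizes_short_iff Sp2_long_commute_t_long_iff)
qed (rule Sp2_long_centralizer_commute)

definition zeta16 :: complex where "zeta16 = cis (pi / 8)"

lemma zeta16_simps [simp]:
  "zeta16 * cnj zeta16 = 1" "cnj zeta16 * zeta16 = 1" "zeta16 * zeta16 = zeta8"
  by (simp_all add: zeta16_def zeta8_def cis_cnj cis_mult)

lemma Sp2_short_conj_t_dichotomy:
  assumes s: "s \<in> Sp2_short" and off: "(s ** t_short ** cadj s) $ 1 $ 2 = 0"
  shows "s ** t_short = t_short ** s \<or>
    s ** diag_conj (dg2 zeta16 (cnj zeta16)) ** cadj s = diag_conj (dg2 (cnj zeta16) zeta16)"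
proof -
  obtain U where U: "U \<in> SU_set" "s = diag_conj U" using s by (auto simp: Sp2_short_iff)
  note r = SU2_unitary_entries[OF U(1)]
  have "\<i> * (U$1$1 * cnj (U$2$1) - U$1$2 * cnj (U$2$2)) = 0"
    using off by (simp add: U(2) t_short_def mat4_mult_nth algebra_simps)
  then have "U$1$1 * cnj (U$2$1) = U$1$2 * cnj (U$2$2)" by simp
  from unitary_rows_dichotomy[OF r(1-3) this] show ?thesis
  proof
    assume "U$1$2 = 0 \<and> U$2$1 = 0"
    then show ?thesis using s Sp2_short_commute_t_short_iff by (simp add: U(2))
  next
    assume U0: "U$1$1 = 0 \<and> U$2$2 = 0"
    then have "U$1$2 * cnj (U$1$2) = 1" "U$2$1 * cnj (U$2$1) = 1" using r(1,2) by simp_all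
    then have "U$1$2 * cnj zeta16 * cnj (U$1$2) = cnj zeta16" "U$2$1 * zeta16 * cnj (U$2$1) = zeta16"
      "cnj (U$1$2) * zeta16 * U$1$2 = zeta16" "cnj (U$2$1) * cnj zeta16 * U$2$1 = cnj zeta16"
      by (simp_all add: unit_mult_conj_cancel)
    then show ?thesis using U0 by (simp add: U(2) mat4_eq_iff mat4_mult_nth)
  qed
qed

lemma rigid_Sp2_short: "rigid Sp2 Sp2_long Sp2_short t_short T"
proof (rule Sp2.rigid_matgrpI[OF Sp2_long_subgroup Sp2_short_subgroup t_short_short t_long_long,
      where n = weyl_long and u = "dg4 1 zeta8 1 (cnj zeta8)" and u' = "dg4 1 (cnj zeta8) 1 zeta8"])
  show "t_long ** t_short = t_short ** t_long"
    by (simp add: t_long_def t_short_def mat4_eq_iff mat4_mult_nth)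
  show "t_long ** y ** cadj t_long \<in> Sp2_short" if "y \<in> Sp2_short" for y
    using that t_long_long by (intro Sp2_diag_conj_mem) (simp_all add: t_long_def Sp2_long_iff)
  fix s e
  assume s: "s \<in> Sp2_short" and e: "e \<in> Sp2_short" "\<forall>y\<in>Sp2_short. e ** y = y ** e"
    and ey: "e ** (s ** t_short ** cadj s) = t_long ** (s ** t_short ** cadj s) ** cadj t_long"
  note ec = Sp2_short_central[OF e]
  define y' where "y' = s ** t_short ** cadj s"
  have "e$1$1 * y'$1$2 = y'$1$2 * cnj \<i>"
    using arg_cong[OF ey[folded y'_def], of "\<lambda>A. A$1$2"] Sp2_short_nth[OF e(1)] ec
    by (simp add: t_long_def mat4_mult_nth)
  also have "\<dots> = - \<i> * y'$1$2" by simp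
  finally have "y'$1$2 = 0" using eq_minus_ii_mult_imp_zero ec(4) by blast
  then show "s ** t_short = t_short ** s \<or>
      s ** diag_conj (dg2 zeta16 (cnj zeta16)) ** cadj s = diag_conj (dg2 (cnj zeta16) zeta16)"
    using Sp2_short_conj_t_dichotomy[OF s] by (simp add: y'_def)
next
  show "weyl_long \<in> Sp2_long" by (rule weyl_long_long)
  show "dg4 1 zeta8 1 (cnj zeta8) \<in> Sp2_long" "dg4 1 (cnj zeta8) 1 zeta8 \<in> Sp2_long"
    by (simp_all add: Sp2_long_iff dg4_Sp2 mult.commute)
  show "diag_conj (dg2 zeta16 (cnj zeta16)) \<in> Sp2_short" by (simp add: diag_conj_dg2_short)
  show "diag_conj (dg2 (cnj zeta16) zeta16) \<in> Sp2_short" using diag_conj_dg2_short[of "cnj zeta16"] by simp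
  have z: "zeta8 * cnj zeta16 = zeta16" "cnj zeta8 * zeta16 = cnj zeta16"
    by (simp_all add: zeta16_def zeta8_def cis_cnj cis_mult)
  show "weyl_long ** diag_conj (dg2 zeta16 (cnj zeta16)) ** cadj weyl_long =
      dg4 1 zeta8 1 (cnj zeta8) ** diag_conj (dg2 zeta16 (cnj zeta16))"
    "weyl_long ** diag_conj (dg2 (cnj zeta16) zeta16) ** cadj weyl_long =
      dg4 1 (cnj zeta8) 1 zeta8 ** diag_conj (dg2 (cnj zeta16) zeta16)"
    using z by (simp_all add: weyl_long_def mat4_eq_iff mat4_mult_nth)
  show "dg4 1 zeta8 1 (cnj zeta8) ** cadj (dg4 1 (cnj zeta8) 1 zeta8) ** weyl_long \<noteq>
      weyl_long ** (dg4 1 zeta8 1 (cnj zeta8) ** cadj (dg4 1 (cnj zeta8) 1 zeta8))"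
    by (simp add: weyl_long_def mat4_eq_iff mat4_mult_nth complex_eq_iff)
qed

lemma ii_mult_ii [simp]: "\<i> * a * \<i> = - a"
proof -
  have "\<i> * a * \<i> = \<i> * \<i> * a" by (simp add: ac_simps)
  then show ?thesis by simp
qed

lemma torus_datum_Sp2_short: "torus_datum Sp2 Sp2_long Sp2_short T"
proof (rule Sp2.torus_datum_matgrpI[OF Sp2_long_Sp2 Sp2_short_Sp2 z_long_long t_short_short _ _ _
      rigid_Sp2_short])
  show "z_long ** y ** cadj z_long = t_short ** y ** cadj t_short" if "y \<in> Sp2_short" for y
    using that Sp2_short_nth[OF that] by (simp add: z_long_def t_short_def mat4_eq_iff mat4_mult_nth)
  show "(\<lambda>x. y ** x ** cadj y) ` Sp2_long = Sp2_long \<longleftrightarrow> y ** t_short = t_short ** y"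
    if "y \<in> Sp2_short" for y
    using that by (simp add: Sp2_short_normalizes_long_iff Sp2_short_commute_t_short_iff)
qed (rule Sp2_short_centralizer_commute)

section \<open>The amalgam\<close>

definition weyl3_0 :: "complex^3^3" where "weyl3_0 = mk3 0 0 1 0 (-1) 0 1 0 0"

lemma weyl3_0_SU: "weyl3_0 \<in> SU_set"
  by (simp add: weyl3_0_def mk3_SU_iff mat3_eq_iff mat3_mult_nth mat_one_nth det_3)

lemma weyl3_0_conj_G1: "(\<lambda>A. weyl3_0 ** A ** cadj weyl3_0) ` SU3_G1 = SU3_G2"
  by (rule SU.conj_image_eqI[OF weyl3_0_SU])
    (simp_all add: SU3_G1_def SU3_G2_def weyl3_0_SU SU_mult_closed SU_cadj_closed,
     simp_all add: weyl3_0_def mat3_mult_nth)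

lemma weyl3_0_conj_G2: "(\<lambda>A. weyl3_0 ** A ** cadj weyl3_0) ` SU3_G2 = SU3_G1"
  by (rule SU.conj_image_eqI[OF weyl3_0_SU])
    (simp_all add: SU3_G1_def SU3_G2_def weyl3_0_SU SU_mult_closed SU_cadj_closed,
     simp_all add: weyl3_0_def mat3_mult_nth)

lemma torus_datum_SU3_swapped: "torus_datum SU3 SU3_G2 SU3_G1 T"
proof -
  have "torus_datum SU3 ((\<lambda>A. weyl3_0 ** A ** cadj weyl3_0) ` SU3_G1)
      ((\<lambda>A. weyl3_0 ** A ** cadj weyl3_0) ` SU3_G2) T"
    using torus_datum_iso[OF group_SU group_SU SU.conj_iso[OF weyl3_0_SU] _ _ torus_datum_SU3]
      SU3_G1_SU SU3_G2_SU by simp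
  then show ?thesis by (simp add: weyl3_0_conj_G1 weyl3_0_conj_G2)
qed

lemma torus_datum_iso_SU3_or_Sp2:
  assumes M: "group M"
    and iso: "(\<exists>\<phi>. \<phi> \<in> iso SU3 M \<and> \<phi> ` SU3_G1 = V \<and> \<phi> ` SU3_G2 = U)
      \<or> (\<exists>\<phi>. \<phi> \<in> iso Sp2 M \<and> \<phi> ` Sp2_long = V \<and> \<phi> ` Sp2_short = U)
      \<or> (\<exists>\<phi>. \<phi> \<in> iso Sp2 M \<and> \<phi> ` Sp2_short = V \<and> \<phi> ` Sp2_long = U)"
  shows "torus_datum M U V T"
  using iso
proof (elim disjE exE conjE)
  fix \<phi> assume \<phi>: "\<phi> \<in> iso SU3 M" "\<phi> ` SU3_G1 = V" "\<phi> ` SU3_G2 = U"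
  show ?thesis
    using torus_datum_iso[OF group_SU M \<phi>(1) _ _ torus_datum_SU3_swapped] \<phi> SU3_G1_SU SU3_G2_SU by simp
next
  fix \<phi> assume \<phi>: "\<phi> \<in> iso Sp2 M" "\<phi> ` Sp2_long = V" "\<phi> ` Sp2_short = U"
  show ?thesis
    using torus_datum_iso[OF group_Sp2 M \<phi>(1) _ _ torus_datum_Sp2_long] \<phi> Sp2_long_Sp2 Sp2_short_Sp2 by simp
next
  fix \<phi> assume \<phi>: "\<phi> \<in> iso Sp2 M" "\<phi> ` Sp2_short = V" "\<phi> ` Sp2_long = U"
  show ?thesis
    using torus_datum_iso[OF group_Sp2 M \<phi>(1) _ _ torus_datum_Sp2_short] \<phi> Sp2_long_Sp2 Sp2_short_Sp2 by simp
qed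

lemma DirProd_factors_commute:
  assumes \<phi>: "\<phi> \<in> hom (G \<times>\<times> K) M" and G: "monoid G" and K: "monoid K"
    and a: "a \<in> carrier G" and b: "b \<in> carrier K"
  shows "\<phi> (a, \<one>\<^bsub>K\<^esub>) \<otimes>\<^bsub>M\<^esub> \<phi> (\<one>\<^bsub>G\<^esub>, b) = \<phi> (\<one>\<^bsub>G\<^esub>, b) \<otimes>\<^bsub>M\<^esub> \<phi> (a, \<one>\<^bsub>K\<^esub>)"
proof -
  have in_carrier: "(a, \<one>\<^bsub>K\<^esub>) \<in> carrier (G \<times>\<times> K)" "(\<one>\<^bsub>G\<^esub>, b) \<in> carrier (G \<times>\<times> K)"
    using a b monoid.one_closed[OF G] monoid.one_closed[OF K] by simp_all
  have comm: "(a, \<one>\<^bsub>K\<^esub>) \<otimes>\<^bsub>G \<times>\<times> K\<^esub> (\<one>\<^bsub>G\<^esub>, b) = (\<one>\<^bsub>G\<^esub>, b) \<otimes>\<^bsub>G \<times>\<times> K\<^esub> (a, \<one>\<^bsub>K\<^esub>)"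
    using a b by (simp add: monoid.l_one[OF G] monoid.r_one[OF G] monoid.l_one[OF K] monoid.r_one[OF K])
  have "\<phi> (a, \<one>\<^bsub>K\<^esub>) \<otimes>\<^bsub>M\<^esub> \<phi> (\<one>\<^bsub>G\<^esub>, b) = \<phi> ((a, \<one>\<^bsub>K\<^esub>) \<otimes>\<^bsub>G \<times>\<times> K\<^esub> (\<one>\<^bsub>G\<^esub>, b))"
    by (rule hom_mult[OF \<phi> in_carrier, symmetric])
  also have "\<dots> = \<phi> ((\<one>\<^bsub>G\<^esub>, b) \<otimes>\<^bsub>G \<times>\<times> K\<^esub> (a, \<one>\<^bsub>K\<^esub>))" by (simp only: comm)
  also have "\<dots> = \<phi> (\<one>\<^bsub>G\<^esub>, b) \<otimes>\<^bsub>M\<^esub> \<phi> (a, \<one>\<^bsub>K\<^esub>)" by (rule hom_mult[OF \<phi> in_carrier(2,1)])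
  finally show ?thesis .
qed

lemma SU2xSU2_factors_commute:
  assumes \<phi>: "\<phi> \<in> iso SU2xSU2 M" and U: "\<phi> ` SU2xSU2_G1 = U" and W: "\<phi> ` SU2xSU2_G2 = W"
  shows "\<forall>x\<in>U. \<forall>w\<in>W. x \<otimes>\<^bsub>M\<^esub> w = w \<otimes>\<^bsub>M\<^esub> x"
proof (intro ballI)
  fix x w assume "x \<in> U" "w \<in> W"
  then obtain a b where "a \<in> SU_set" "x = \<phi> (a, mat 1)" "b \<in> SU_set" "w = \<phi> (mat 1, b)"
    using U W by (auto simp: SU2xSU2_G1_def SU2xSU2_G2_def)
  then show "x \<otimes>\<^bsub>M\<^esub> w = w \<otimes>\<^bsub>M\<^esub> x"
    using DirProd_factors_commute[of \<phi> SU2 SU2 M a b] \<phi> group.is_monoid[OF group_SU] by (simp add: iso_def)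
qed

lemma rigid_commute_transfer:
  fixes A B C :: "'a monoid" and H :: "'h monoid"
  assumes grp: "group A" "group B" "group C" "group H"
    and hom: "\<pi> \<in> hom A H" "\<pi> \<in> hom B H" "\<pi> \<in> hom C H"
    and U: "U \<subseteq> carrier C" and W: "W \<subseteq> carrier B \<inter> carrier C"
    and V: "subgroup V A" "subgroup V B" and comp: "\<forall>x\<in>V. \<forall>y\<in>V. x \<otimes>\<^bsub>A\<^esub> y = x \<otimes>\<^bsub>B\<^esub> y"
    and UW: "\<forall>x\<in>U. \<forall>w\<in>W. x \<otimes>\<^bsub>C\<^esub> w = w \<otimes>\<^bsub>C\<^esub> x"
    and kU: "central_kernel_on A \<pi> H U" and kV: "central_kernel_on A \<pi> H V"
    and rig: "rigid A U V t TYPE('h)"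
    and z: "z \<in> W" and t': "t' \<in> V"
    and acts: "\<forall>y\<in>V. z \<otimes>\<^bsub>B\<^esub> y \<otimes>\<^bsub>B\<^esub> inv\<^bsub>B\<^esub> z = t' \<otimes>\<^bsub>B\<^esub> y \<otimes>\<^bsub>B\<^esub> inv\<^bsub>B\<^esub> t'"
  shows "t' \<otimes>\<^bsub>A\<^esub> t = t \<otimes>\<^bsub>A\<^esub> t'"
proof -
  interpret A: group_hom A H \<pi> using grp(1,4) hom(1) by (simp add: group_hom_def group_hom_axioms_def)
  interpret B: group_hom B H \<pi> using grp(2,4) hom(2) by (simp add: group_hom_def group_hom_axioms_def)
  interpret C: group_hom C H \<pi> using grp(3,4) hom(3) by (simp add: group_hom_def group_hom_axioms_def)
  have conj_eq: "t' \<otimes>\<^bsub>B\<^esub> y \<otimes>\<^bsub>B\<^esub> inv\<^bsub>B\<^esub> t' = t' \<otimes>\<^bsub>A\<^esub> y \<otimes>\<^bsub>A\<^esub> inv\<^bsub>A\<^esub> t'" if "y \<in> V" for y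
    using that t' V comp inv_eq_on_common_subgroup[OF grp(1,2) V comp t']
    by (simp add: subgroup.m_closed subgroup.m_inv_closed)
  have "centralizes_induces A \<pi> H U V (\<pi> z) t'"
    unfolding centralizes_induces_def
  proof (intro conjI ballI)
    show "\<pi> z \<in> carrier H" using z W by auto
    show "\<pi> z \<otimes>\<^bsub>H\<^esub> \<pi> x = \<pi> x \<otimes>\<^bsub>H\<^esub> \<pi> z" if "x \<in> U" for x
    proof -
      have "x \<otimes>\<^bsub>C\<^esub> z = z \<otimes>\<^bsub>C\<^esub> x" using UW that z by blast
      then show ?thesis using C.hom_commute[of z x] that z U W by auto
    qed
    show "\<pi> z \<otimes>\<^bsub>H\<^esub> \<pi> y \<otimes>\<^bsub>H\<^esub> inv\<^bsub>H\<^esub> \<pi> z = \<pi> (t' \<otimes>\<^bsub>A\<^esub> y \<otimes>\<^bsub>A\<^esub> inv\<^bsub>A\<^esub> t')" if "y \<in> V" for y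
    proof -
      have "z \<in> carrier B" "y \<in> carrier B" using z W that V(2) by (auto dest: subgroup.mem_carrier)
      then have "\<pi> z \<otimes>\<^bsub>H\<^esub> \<pi> y \<otimes>\<^bsub>H\<^esub> inv\<^bsub>H\<^esub> \<pi> z = \<pi> (z \<otimes>\<^bsub>B\<^esub> y \<otimes>\<^bsub>B\<^esub> inv\<^bsub>B\<^esub> z)"
        by (simp add: B.hom_conj)
      then show ?thesis using acts conj_eq that by simp
    qed
  qed
  then show ?thesis
    using rig[unfolded rigid_def, THEN spec[of _ H], THEN spec[of _ \<pi>], THEN spec[of _ "\<pi> z"],
        THEN spec[of _ t']] grp(4) hom(1) kU kV t' by blast
qed

lemma normalizers_eq_of_torus_data:
  fixes M12 M13 M23 :: "'a monoid" and H :: "'h monoid"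
  assumes grp: "group M12" "group M13" "group M23" "group H"
    and hom: "\<pi> \<in> hom M12 H" "\<pi> \<in> hom M13 H" "\<pi> \<in> hom M23 H"
    and M1: "M1 \<subseteq> carrier M12 \<inter> carrier M13" and M3: "M3 \<subseteq> carrier M23 \<inter> carrier M13"
    and M2: "subgroup M2 M12" "subgroup M2 M23" and comp: "\<forall>x\<in>M2. \<forall>y\<in>M2. x \<otimes>\<^bsub>M12\<^esub> y = x \<otimes>\<^bsub>M23\<^esub> y"
    and c13: "\<forall>x\<in>M1. \<forall>w\<in>M3. x \<otimes>\<^bsub>M13\<^esub> w = w \<otimes>\<^bsub>M13\<^esub> x"
    and k1: "central_kernel_on M12 \<pi> H M1" "central_kernel_on M12 \<pi> H M2"
    and k3: "central_kernel_on M23 \<pi> H M3" "central_kernel_on M23 \<pi> H M2"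
    and d12: "torus_datum M12 M1 M2 TYPE('h)" and d23: "torus_datum M23 M3 M2 TYPE('h)"
  shows "M2 \<inter> normalizer M12 M1 = M2 \<inter> normalizer M23 M3"
proof -
  obtain z1 t1 where z1: "z1 \<in> M1" and t1: "t1 \<in> M2"
    and acts1: "\<forall>y\<in>M2. z1 \<otimes>\<^bsub>M12\<^esub> y \<otimes>\<^bsub>M12\<^esub> inv\<^bsub>M12\<^esub> z1 = t1 \<otimes>\<^bsub>M12\<^esub> y \<otimes>\<^bsub>M12\<^esub> inv\<^bsub>M12\<^esub> t1"
    and D1: "M2 \<inter> normalizer M12 M1 = {y\<in>M2. y \<otimes>\<^bsub>M12\<^esub> t1 = t1 \<otimes>\<^bsub>M12\<^esub> y}"
    and ab1: "\<forall>a\<in>M2 \<inter> normalizer M12 M1. \<forall>b\<in>M2 \<inter> normalizer M12 M1. a \<otimes>\<^bsub>M12\<^esub> b = b \<otimes>\<^bsub>M12\<^esub> a"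
    and rig1: "rigid M12 M1 M2 t1 TYPE('h)"
    using d12 unfolding torus_datum_def by blast
  obtain z3 t3 where z3: "z3 \<in> M3" and t3: "t3 \<in> M2"
    and acts3: "\<forall>y\<in>M2. z3 \<otimes>\<^bsub>M23\<^esub> y \<otimes>\<^bsub>M23\<^esub> inv\<^bsub>M23\<^esub> z3 = t3 \<otimes>\<^bsub>M23\<^esub> y \<otimes>\<^bsub>M23\<^esub> inv\<^bsub>M23\<^esub> t3"
    and D3: "M2 \<inter> normalizer M23 M3 = {y\<in>M2. y \<otimes>\<^bsub>M23\<^esub> t3 = t3 \<otimes>\<^bsub>M23\<^esub> y}"
    and ab3: "\<forall>a\<in>M2 \<inter> normalizer M23 M3. \<forall>b\<in>M2 \<inter> normalizer M23 M3. a \<otimes>\<^bsub>M23\<^esub> b = b \<otimes>\<^bsub>M23\<^esub> a"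
    and rig3: "rigid M23 M3 M2 t3 TYPE('h)"
    using d23 unfolding torus_datum_def by blast
  have "t3 \<otimes>\<^bsub>M12\<^esub> t1 = t1 \<otimes>\<^bsub>M12\<^esub> t3"
    by (rule rigid_commute_transfer[OF grp(1,3,2,4) hom(1,3,2) _ _ M2 comp c13 k1 rig1 z3 t3 acts3])
      (use M1 M3 in auto)
  then have t3_D1: "t3 \<in> M2 \<inter> normalizer M12 M1" using t3 by (simp add: D1)
  have "t1 \<otimes>\<^bsub>M23\<^esub> t3 = t3 \<otimes>\<^bsub>M23\<^esub> t1"
    by (rule rigid_commute_transfer[OF grp(3,1,2,4) hom(3,1,2) _ _ M2(2,1) _ _ k3 rig3 z1 t1 acts1])
      (use M1 M3 comp c13 in auto)
  then have t1_D3: "t1 \<in> M2 \<inter> normalizer M23 M3" using t1 by (simp add: D3)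
  show ?thesis
  proof (intro equalityI subsetI)
    fix y assume y: "y \<in> M2 \<inter> normalizer M12 M1"
    then have "y \<otimes>\<^bsub>M12\<^esub> t3 = t3 \<otimes>\<^bsub>M12\<^esub> y" using ab1 t3_D1 by blast
    then have "y \<otimes>\<^bsub>M23\<^esub> t3 = t3 \<otimes>\<^bsub>M23\<^esub> y" using comp y t3 by simp
    then show "y \<in> M2 \<inter> normalizer M23 M3" using y by (simp add: D3)
  next
    fix y assume y: "y \<in> M2 \<inter> normalizer M23 M3"
    then have "y \<otimes>\<^bsub>M23\<^esub> t1 = t1 \<otimes>\<^bsub>M23\<^esub> y" using ab3 t1_D3 by blast
    then have "y \<otimes>\<^bsub>M12\<^esub> t1 = t1 \<otimes>\<^bsub>M12\<^esub> y" using comp y t1 by simp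
    then show "y \<in> M2 \<inter> normalizer M12 M1" using y by (simp add: D1)
  qed
qed

theorem lemma5p1:
  fixes M12 M13 M23 :: "'a monoid" and M1 M2 M3 :: "'a set"
    and H :: "'h monoid" and \<pi> :: "'a \<Rightarrow> 'h"
  assumes grp: "group M12" "group M13" "group M23"
    \<comment> \<open>amalgam: rank-one groups are the intersections of the rank-two groups\<close>
    and M1: "M1 = carrier M12 \<inter> carrier M13"
    and M2: "M2 = carrier M12 \<inter> carrier M23"
    and M3: "M3 = carrier M13 \<inter> carrier M23"
    \<comment> \<open>amalgam: intersections of members are subgroups, with compatible products\<close>
    and sub: "subgroup M1 M12" "subgroup M1 M13" "subgroup M2 M12" "subgroup M2 M23"
             "subgroup M3 M13" "subgroup M3 M23"
    and comp1: "\<forall>x\<in>M1. \<forall>y\<in>M1. x \<otimes>\<^bsub>M12\<^esub> y = x \<otimes>\<^bsub>M13\<^esub> y"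
    and comp2: "\<forall>x\<in>M2. \<forall>y\<in>M2. x \<otimes>\<^bsub>M12\<^esub> y = x \<otimes>\<^bsub>M23\<^esub> y"
    and comp3: "\<forall>x\<in>M3. \<forall>y\<in>M3. x \<otimes>\<^bsub>M13\<^esub> y = x \<otimes>\<^bsub>M23\<^esub> y"
    \<comment> \<open>unambiguous, with the prescribed diagram\<close>
    and iso12: "\<exists>\<phi>. \<phi> \<in> iso SU3 M12 \<and> \<phi> ` SU3_G1 = M1 \<and> \<phi> ` SU3_G2 = M2"
    and iso13: "\<exists>\<phi>. \<phi> \<in> iso SU2xSU2 M13 \<and> \<phi> ` SU2xSU2_G1 = M1 \<and> \<phi> ` SU2xSU2_G2 = M3"
    and iso23: "(\<exists>\<phi>. \<phi> \<in> iso SU3 M23 \<and> \<phi> ` SU3_G1 = M2 \<and> \<phi> ` SU3_G2 = M3)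
              \<or> (\<exists>\<phi>. \<phi> \<in> iso Sp2 M23 \<and> \<phi> ` Sp2_long = M2 \<and> \<phi> ` Sp2_short = M3)
              \<or> (\<exists>\<phi>. \<phi> \<in> iso Sp2 M23 \<and> \<phi> ` Sp2_short = M2 \<and> \<phi> ` Sp2_long = M3)"
    \<comment> \<open>strongly noncollapsing, witnessed by H and \<pi>\<close>
    and H: "group H"
    and hom: "\<pi> \<in> hom M12 H" "\<pi> \<in> hom M13 H" "\<pi> \<in> hom M23 H"
    and gen: "generate H (\<pi> ` (carrier M12 \<union> carrier M13 \<union> carrier M23)) = carrier H"
    and ker1: "\<forall>x\<in>M1. \<pi> x = \<one>\<^bsub>H\<^esub> \<longrightarrow> (\<forall>y\<in>M1. x \<otimes>\<^bsub>M12\<^esub> y = y \<otimes>\<^bsub>M12\<^esub> x)"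
    and ker2: "\<forall>x\<in>M2. \<pi> x = \<one>\<^bsub>H\<^esub> \<longrightarrow> (\<forall>y\<in>M2. x \<otimes>\<^bsub>M12\<^esub> y = y \<otimes>\<^bsub>M12\<^esub> x)"
    and ker3: "\<forall>x\<in>M3. \<pi> x = \<one>\<^bsub>H\<^esub> \<longrightarrow> (\<forall>y\<in>M3. x \<otimes>\<^bsub>M13\<^esub> y = y \<otimes>\<^bsub>M13\<^esub> x)"
  shows "M2 \<inter> normalizer M12 M1 = M2 \<inter> normalizer M23 M3"
proof -
  obtain \<phi> where \<phi>: "\<phi> \<in> iso SU3 M12" "\<phi> ` SU3_G1 = M1" "\<phi> ` SU3_G2 = M2" using iso12 by blast
  have d12: "torus_datum M12 M1 M2 TYPE('h)"
    using torus_datum_iso[OF group_SU grp(1) \<phi>(1) _ _ torus_datum_SU3] \<phi>(2,3) SU3_G1_SU SU3_G2_SU by simp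
  have d23: "torus_datum M23 M3 M2 TYPE('h)" by (rule torus_datum_iso_SU3_or_Sp2[OF grp(3) iso23])
  have c13: "\<forall>x\<in>M1. \<forall>w\<in>M3. x \<otimes>\<^bsub>M13\<^esub> w = w \<otimes>\<^bsub>M13\<^esub> x"
    using iso13 SU2xSU2_factors_commute by blast
  have k3: "central_kernel_on M23 \<pi> H M3" "central_kernel_on M23 \<pi> H M2"
    using ker3 comp3 ker2 comp2 by (auto simp: central_kernel_on_def)
  have k1: "central_kernel_on M12 \<pi> H M1" "central_kernel_on M12 \<pi> H M2"
    using ker1 ker2 by (simp_all add: central_kernel_on_def)
  have "M1 \<subseteq> carrier M12 \<inter> carrier M13" "M3 \<subseteq> carrier M23 \<inter> carrier M13" using M1 M3 by auto
  then show ?thesis by (rule normalizers_eq_of_torus_data[OF grp H hom _ _ sub(3,4) comp2 c13 k1 k3 d12 d23])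
qed

end
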